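(* Let $\kappa>0$ (possibly depending on $\beta$) with $\tilde\kappa=\kappa\beta>\frac1\pi$, let $\beta>0$ be small enough, and let $\varphi_\beta$ be a minimizer of $F_{\beta,\kappa}$ in $\mathcal J$. Let $\frac T2$ be the point of $(0,1)$ such that $\varphi_\beta(\frac T2)=\frac\pi2$. Then $\varphi_\beta(x)=\pi-\varphi_\beta(T-x)$ for all $x\in[0,T]$; in particular $\varphi_\beta(T)=\pi$. Furthermore $\varphi_\beta(x+T)=\pi+\varphi_\beta(x)$ for all $x\in[0,1-T]$.
   Context: For parameters $\beta>0$ and $\kappa>0$ define, for $\varphi\in H^1((0,1))$, $$F_{\beta,\kappa}(\varphi)=\frac18\int_0^1\left(\varphi'(x)^2+\frac{1}{\beta^2}\sin^2\varphi(x)\right)dx-\frac{\kappa}{2}\int_0^1\varphi'(x)\,dx,$$ and $\mathcal J=\{\varphi\in H^1((0,1)):\varphi(0)=0\}$. (Minimizers are increasing, so the point $T/2$ is unique when it exists.) *)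

theory Defs
  imports "HOL-Analysis.Analysis"
begin

text \<open>One-dimensional Sobolev space H^1((0,1)), via its continuous representative:
  phi has weak derivative g (g square integrable on (0,1)) iff
  phi x = phi 0 + integral of g over [0,x] for all x in [0,1].\<close>

definition has_H1_deriv :: "(real \<Rightarrow> real) \<Rightarrow> (real \<Rightarrow> real) \<Rightarrow> bool" where
  "has_H1_deriv phi g \<longleftrightarrow>
     set_integrable lborel {0..1} g \<and>
     set_integrable lborel {0..1} (\<lambda>x. (g x)\<^sup>2) \<and>
     (\<forall>x\<in>{0..1}. phi x = phi 0 + (LINT t:{0..x}|lborel. g t))"

definition H1 :: "(real \<Rightarrow> real) set" where
  "H1 = {phi. \<exists>g. has_H1_deriv phi g}"

definition J_class :: "(real \<Rightarrow> real) set" where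
  "J_class = {phi \<in> H1. phi 0 = 0}"

text \<open>The functional F_{beta,kappa}, evaluated with a weak derivative g of phi
  (its value does not depend on the a.e. choice of g).\<close>
definition F_energy :: "real \<Rightarrow> real \<Rightarrow> (real \<Rightarrow> real) \<Rightarrow> (real \<Rightarrow> real) \<Rightarrow> real" where
  "F_energy \<beta> \<kappa> phi g =
     1/8 * (LINT x:{0..1}|lborel. (g x)\<^sup>2 + (sin (phi x))\<^sup>2 / \<beta>\<^sup>2)
     - \<kappa>/2 * (LINT x:{0..1}|lborel. g x)"

definition is_minimizer :: "real \<Rightarrow> real \<Rightarrow> (real \<Rightarrow> real) \<Rightarrow> bool" where
  "is_minimizer \<beta> \<kappa> phi \<longleftrightarrow>
     phi \<in> J_class \<and>
     (\<forall>g. has_H1_deriv phi g \<longrightarrow>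
        (\<forall>psi h. psi \<in> J_class \<longrightarrow> has_H1_deriv psi h \<longrightarrow>
            F_energy \<beta> \<kappa> phi g \<le> F_energy \<beta> \<kappa> psi h))"

end

theory Submission
  imports Defs
begin

text \<open>Testing the minimality of \<open>\<phi>\<close> against \<open>\<phi> + e min(x,s)\<close> gives an integrated
  Euler-Lagrange equation, from which \<open>\<phi>\<close> is \<open>C\<^sup>2\<close> with \<open>\<phi>'' = sin(2\<phi>)/(2\<beta>\<^sup>2)\<close> and
  natural boundary condition \<open>\<phi>'(1) = 2\<kappa>\<close>. Hence \<open>\<phi>'\<^sup>2 - sin\<^sup>2\<phi>/\<beta>\<^sup>2 = C\<close> is constant;
  \<open>C > 0\<close> because \<open>\<phi>\<close> does not vanish identically, so \<open>\<phi>' = \<surd>(C + sin\<^sup>2\<phi>/\<beta>\<^sup>2)\<close>,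
  an autonomous ODE with Lipschitz right-hand side that is invariant under
  \<open>\<phi> \<mapsto> \<pi> - \<phi>(T - \<cdot>)\<close> and \<open>\<phi> \<mapsto> \<phi>(\<cdot> + T) - \<pi>\<close>. Uniqueness for the ODE gives both
  symmetries wherever they make sense. It remains to see \<open>T \<le> 1\<close>, i.e. \<open>\<phi>(1) \<ge> \<pi>\<close>:
  otherwise the Bogomolnyi bound \<open>\<integral>\<phi>'\<^sup>2 + sin\<^sup>2\<phi>/\<beta>\<^sup>2 \<ge> 2(1 - cos \<phi>(1))/\<beta>\<close> shows that
  \<open>\<phi>\<close> has more energy than an explicit competitor (a kink of width \<open>O(\<beta>)\<close> followed by a
  short ramp to \<open>\<pi> + 1/4\<close>), since \<open>\<kappa>\<beta> > 1/\<pi>\<close> and \<beta> is small.\<close>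

section \<open>Sobolev functions on the unit interval\<close>

lemma has_H1_derivD:
  assumes "has_H1_deriv psi h"
  shows "h integrable_on {0..1}" "(\<lambda>x. (h x)\<^sup>2) integrable_on {0..1}"
    "\<And>x. x \<in> {0..1} \<Longrightarrow> psi x = psi 0 + integral {0..x} h"
    "continuous_on {0..1} psi"
proof -
  have i1: "set_integrable lborel {0..1} h" and i2: "set_integrable lborel {0..1} (\<lambda>x. (h x)\<^sup>2)"
    and rep: "\<forall>x\<in>{0..1}. psi x = psi 0 + (LINT t:{0..x}|lborel. h t)"
    using assms unfolding has_H1_deriv_def by blast+
  show "h integrable_on {0..1}" using set_borel_integral_eq_integral(1)[OF i1] .
  show "(\<lambda>x. (h x)\<^sup>2) integrable_on {0..1}" using set_borel_integral_eq_integral(1)[OF i2] .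
  have R: "psi x = psi 0 + integral {0..x} h" if "x \<in> {0..1}" for x
  proof -
    have "set_integrable lborel {0..x} h"
      by (rule set_integrable_subset[OF i1]) (use that in auto)
    then have "(LINT t:{0..x}|lborel. h t) = integral {0..x} h"
      by (rule set_borel_integral_eq_integral(2))
    moreover have "psi x = psi 0 + (LINT t:{0..x}|lborel. h t)" using rep that by blast
    ultimately show ?thesis by simp
  qed
  then show "\<And>x. x \<in> {0..1} \<Longrightarrow> psi x = psi 0 + integral {0..x} h" by blast
  have "continuous_on {0..1} (\<lambda>x. psi 0 + integral {0..x} h)"
    by (intro continuous_intros indefinite_integral_continuous_1 set_borel_integral_eq_integral(1)[OF i1])
  moreover have "continuous_on {0..1} psi = continuous_on {0..1} (\<lambda>x. psi 0 + integral {0..x} h)"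
    by (intro continuous_on_cong refl) (rule R)
  ultimately show "continuous_on {0..1} psi" by simp
qed

lemma has_H1_deriv_of_C1:
  assumes cP: "continuous_on {0..1} P"
    and d: "\<And>s. s \<in> {0..1} \<Longrightarrow> (phi has_real_derivative P s) (at s within {0..1})"
  shows "has_H1_deriv phi P"
proof -
  have i1: "set_integrable lborel {0..1} P" by (rule borel_integrable_atLeastAtMost'[OF cP])
  have i2: "set_integrable lborel {0..1} (\<lambda>x. (P x)\<^sup>2)"
    by (rule borel_integrable_atLeastAtMost') (intro continuous_intros cP)
  have r: "phi x = phi 0 + (LINT t:{0..x}|lborel. P t)" if x: "x \<in> {0..1}" for x
  proof -
    have "set_integrable lborel {0..x} P" by (rule set_integrable_subset[OF i1]) (use x in auto)
    then have e: "(LINT t:{0..x}|lborel. P t) = integral {0..x} P"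
      by (rule set_borel_integral_eq_integral(2))
    have "(P has_integral (phi x - phi 0)) {0..x}"
    proof (rule fundamental_theorem_of_calculus)
      show "0 \<le> x" using x by simp
      fix y assume y: "y \<in> {0..x}"
      have "(phi has_real_derivative P y) (at y within {0..x})"
        by (rule has_field_derivative_subset[OF d]) (use x y in auto)
      then show "(phi has_vector_derivative P y) (at y within {0..x})"
        by (simp add: has_real_derivative_iff_has_vector_derivative)
    qed
    then have "integral {0..x} P = phi x - phi 0" by (rule integral_unique)
    then show ?thesis using e by simp
  qed
  show ?thesis unfolding has_H1_deriv_def using i1 i2 r by blast
qed

lemma J_classI: "has_H1_deriv psi h \<Longrightarrow> psi 0 = 0 \<Longrightarrow> psi \<in> J_class"
  unfolding J_class_def H1_def by blast

lemma F_energy_eq: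
  assumes "has_H1_deriv psi h"
  shows "F_energy \<beta> \<kappa> psi h = 1/8 * (integral {0..1} (\<lambda>x. (h x)\<^sup>2)
           + integral {0..1} (\<lambda>x. (sin (psi x))\<^sup>2) / \<beta>\<^sup>2) - \<kappa>/2 * (psi 1 - psi 0)"
proof -
  note B = has_H1_derivD[OF assms]
  have i1: "set_integrable lborel {0..1} h" and i2: "set_integrable lborel {0..1} (\<lambda>x. (h x)\<^sup>2)"
    using assms unfolding has_H1_deriv_def by blast+
  have "continuous_on {0..1} (\<lambda>x. (sin (psi x))\<^sup>2 * (1 / \<beta>\<^sup>2))"
    by (intro continuous_intros B(4))
  then have cs: "continuous_on {0..1} (\<lambda>x. (sin (psi x))\<^sup>2 / \<beta>\<^sup>2)"
    by simp
  have i3: "set_integrable lborel {0..1} (\<lambda>x. (sin (psi x))\<^sup>2 / \<beta>\<^sup>2)"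
    by (rule borel_integrable_atLeastAtMost'[OF cs])
  have "(LINT x:{0..1}|lborel. (h x)\<^sup>2 + (sin (psi x))\<^sup>2 / \<beta>\<^sup>2)
      = integral {0..1} (\<lambda>x. (h x)\<^sup>2 + (sin (psi x))\<^sup>2 / \<beta>\<^sup>2)"
    by (rule set_borel_integral_eq_integral(2)[OF set_integral_add(1)[OF i2 i3]])
  also have "\<dots> = integral {0..1} (\<lambda>x. (h x)\<^sup>2) + integral {0..1} (\<lambda>x. (sin (psi x))\<^sup>2 / \<beta>\<^sup>2)"
    by (rule integral_add[OF B(2) integrable_continuous_interval[OF cs]])
  finally have e1: "(LINT x:{0..1}|lborel. (h x)\<^sup>2 + (sin (psi x))\<^sup>2 / \<beta>\<^sup>2) = integral {0..1} (\<lambda>x. (h x)\<^sup>2)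
           + integral {0..1} (\<lambda>x. (sin (psi x))\<^sup>2) / \<beta>\<^sup>2" by simp
  have e2: "(LINT x:{0..1}|lborel. h x) = psi 1 - psi 0"
  proof -
    have "psi 1 = psi 0 + integral {0..1} h" using B(3)[of 1] by auto
    then show ?thesis using set_borel_integral_eq_integral(2)[OF i1] by linarith
  qed
  show ?thesis unfolding F_energy_def e1 e2 by (rule refl)
qed

lemma set_integrable_mult_of_square_integrable:
  fixes g k :: "real \<Rightarrow> real"
  assumes "set_integrable lborel A g" "set_integrable lborel A k"
    "set_integrable lborel A (\<lambda>x. (g x)\<^sup>2)" "set_integrable lborel A (\<lambda>x. (k x)\<^sup>2)"
  shows "set_integrable lborel A (\<lambda>x. g x * k x)"
proof (rule set_integrable_bound)
  show "set_integrable lborel A (\<lambda>x. (g x)\<^sup>2 + (k x)\<^sup>2)"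
    using set_integral_add(1)[OF assms(3,4)] .
  have m1: "(\<lambda>x. indicator A x *\<^sub>R g x) \<in> borel_measurable lborel"
    using assms(1) unfolding set_integrable_def by (rule borel_measurable_integrable)
  have m2: "(\<lambda>x. indicator A x *\<^sub>R k x) \<in> borel_measurable lborel"
    using assms(2) unfolding set_integrable_def by (rule borel_measurable_integrable)
  have "(\<lambda>x. (indicator A x *\<^sub>R g x) * (indicator A x *\<^sub>R k x)) \<in> borel_measurable lborel"
    using m1 m2 by measurable
  moreover have "(\<lambda>x. (indicator A x *\<^sub>R g x) * (indicator A x *\<^sub>R k x)) = (\<lambda>x. indicator A x *\<^sub>R (g x * k x))"
    by (auto simp: indicator_def)
  ultimately show "set_borel_measurable lborel A (\<lambda>x. g x * k x)"
    unfolding set_borel_measurable_def by simp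
  have "\<bar>g x * k x\<bar> \<le> (g x)\<^sup>2 + (k x)\<^sup>2" for x
  proof -
    have "0 \<le> (\<bar>g x\<bar> - \<bar>k x\<bar>)\<^sup>2" by simp
    then have "\<bar>g x\<bar> * \<bar>k x\<bar> * 2 \<le> (g x)\<^sup>2 + (k x)\<^sup>2"
      by (simp add: power2_eq_square algebra_simps)
    moreover have "0 \<le> \<bar>g x\<bar> * \<bar>k x\<bar>" by simp
    ultimately show ?thesis unfolding abs_mult by linarith
  qed
  then show "AE x in lborel. x \<in> A \<longrightarrow> norm (g x * k x) \<le> norm ((g x)\<^sup>2 + (k x)\<^sup>2)"
    by auto
qed

lemma has_H1_deriv_add_scaled:
  assumes "has_H1_deriv phi g" "has_H1_deriv eta k"
  shows "has_H1_deriv (\<lambda>x. phi x + e * eta x) (\<lambda>x. g x + e * k x)"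
proof -
  have g1: "set_integrable lborel {0..1} g" and g2: "set_integrable lborel {0..1} (\<lambda>x. (g x)\<^sup>2)"
    and gr: "\<forall>x\<in>{0..1}. phi x = phi 0 + (LINT t:{0..x}|lborel. g t)"
    using assms(1) unfolding has_H1_deriv_def by blast+
  have k1: "set_integrable lborel {0..1} k" and k2: "set_integrable lborel {0..1} (\<lambda>x. (k x)\<^sup>2)"
    and kr: "\<forall>x\<in>{0..1}. eta x = eta 0 + (LINT t:{0..x}|lborel. k t)"
    using assms(2) unfolding has_H1_deriv_def by blast+
  have gk: "set_integrable lborel {0..1} (\<lambda>x. g x * k x)"
    by (rule set_integrable_mult_of_square_integrable[OF g1 k1 g2 k2])
  have s1: "set_integrable lborel {0..1} (\<lambda>x. g x + e * k x)"
    by (intro set_integral_add(1) g1 set_integrable_mult_right k1)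
  have "set_integrable lborel {0..1} (\<lambda>x. (g x)\<^sup>2 + ((2*e) * (g x * k x) + e\<^sup>2 * (k x)\<^sup>2))"
    by (intro set_integral_add(1) g2 set_integrable_mult_right gk k2)
  moreover have "(\<lambda>x. (g x)\<^sup>2 + ((2*e) * (g x * k x) + e\<^sup>2 * (k x)\<^sup>2)) = (\<lambda>x. (g x + e * k x)\<^sup>2)"
    by (auto simp: power2_eq_square algebra_simps)
  ultimately have s2: "set_integrable lborel {0..1} (\<lambda>x. (g x + e * k x)\<^sup>2)" by simp
  have r: "phi x + e * eta x = (phi 0 + e * eta 0) + (LINT t:{0..x}|lborel. g t + e * k t)"
    if x: "x \<in> {0..1}" for x
  proof -
    have a: "set_integrable lborel {0..x} g" by (rule set_integrable_subset[OF g1]) (use x in auto)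
    have b: "set_integrable lborel {0..x} k" by (rule set_integrable_subset[OF k1]) (use x in auto)
    have "(LINT t:{0..x}|lborel. g t + e * k t) = (LINT t:{0..x}|lborel. g t) + e * (LINT t:{0..x}|lborel. k t)"
      using set_integral_add(2)[OF a set_integrable_mult_right[OF b, of e]] by simp
    moreover have "phi x = phi 0 + (LINT t:{0..x}|lborel. g t)" using gr x by blast
    moreover have "eta x = eta 0 + (LINT t:{0..x}|lborel. k t)" using kr x by blast
    ultimately show ?thesis by (simp add: algebra_simps)
  qed
  show ?thesis unfolding has_H1_deriv_def using s1 s2 r by blast
qed

lemma has_H1_deriv_min:
  assumes "s \<in> {0..1::real}"
  shows "has_H1_deriv (\<lambda>x. min x s) (\<lambda>x. indicator {..s} x)"
proof -
  have c: "set_integrable lborel {0..s} (\<lambda>_. 1::real)"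
    by (rule borel_integrable_atLeastAtMost') simp
  have eq: "(\<lambda>x. indicator {0..1} x *\<^sub>R (indicator {..s} x :: real)) = (\<lambda>x. indicator {0..s} x *\<^sub>R (1::real))"
    using assms by (auto simp: indicator_def)
  have i1: "set_integrable lborel {0..1} (\<lambda>x. indicator {..s} x :: real)"
    using c unfolding set_integrable_def eq .
  have "(\<lambda>x. (indicator {..s} x :: real)\<^sup>2) = (\<lambda>x. indicator {..s} x)"
    by (auto simp: indicator_def)
  then have i2: "set_integrable lborel {0..1} (\<lambda>x. (indicator {..s} x :: real)\<^sup>2)"
    using i1 by simp
  have r: "min x s = min 0 s + (LINT t:{0..x}|lborel. (indicator {..s} t :: real))" if x: "x \<in> {0..1}" for x
  proof -
    have "set_integrable lborel {0..x} (\<lambda>x. indicator {..s} x :: real)"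
      by (rule set_integrable_subset[OF i1]) (use x in auto)
    then have "(LINT t:{0..x}|lborel. (indicator {..s} t :: real)) = integral {0..x} (\<lambda>t. indicator {..s} t :: real)"
      by (rule set_borel_integral_eq_integral(2))
    also have "\<dots> = integral {0..x} (\<lambda>t. if t \<in> {..s} then 1 else 0 :: real)"
      by (rule arg_cong[where f="integral {0..x}"]) (auto simp: indicator_def)
    also have "\<dots> = integral ({..s} \<inter> {0..x}) (\<lambda>t. 1 :: real)"
      by (rule integral_restrict_Int)
    also have "{..s} \<inter> {0..x} = {0..min x s}" by auto
    also have "integral {0..min x s} (\<lambda>t. 1 :: real) = min x s"
      using assms x by simp
    finally show ?thesis using assms by simp
  qed
  show ?thesis unfolding has_H1_deriv_def using i1 i2 r by blast
qed

lemma set_integrable_bounded_unit: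
  fixes f :: "real \<Rightarrow> real"
  assumes m: "f \<in> borel_measurable lborel" and b: "\<And>x. x \<in> {0..1} \<Longrightarrow> \<bar>f x\<bar> \<le> B"
  shows "set_integrable lborel {0..1} f"
proof (rule set_integrable_bound[where f="\<lambda>_::real. B"])
  show "set_integrable lborel {0..1} (\<lambda>_::real. B)" using borel_integrable_atLeastAtMost'[OF continuous_on_const] .
  show "set_borel_measurable lborel {0..1} f"
    unfolding set_borel_measurable_def using m by measurable
  show "AE x in lborel. x \<in> {0..1} \<longrightarrow> norm (f x) \<le> norm B"
    using b by (auto intro!: AE_I2) (smt (verit) real_norm_def)
qed

lemma abs_sin_diff_le: "\<bar>sin (x::real) - sin y\<bar> \<le> \<bar>x - y\<bar>"
proof -
  have "\<bar>sin x - sin y\<bar> = \<bar>2 * sin ((x - y)/2) * cos ((x + y)/2)\<bar>"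
    by (simp add: sin_diff_sin)
  also have "\<dots> \<le> 2 * \<bar>sin ((x-y)/2)\<bar>" by (simp add: abs_mult mult_left_le)
  also have "\<dots> \<le> 2 * \<bar>(x-y)/2\<bar>" using abs_sin_x_le_abs_x[of "(x-y)/2"] by linarith
  finally show ?thesis by simp
qed

lemma sin_add_square_le: "(sin (a + b))\<^sup>2 \<le> (sin a)\<^sup>2 + sin (2*a) * b + 2 * (b::real)\<^sup>2"
proof -
  define f where "f t = (sin (a + t))\<^sup>2 - (sin a)\<^sup>2 - sin (2*a) * t" for t
  have D: "(f has_real_derivative (sin (2*a + 2*t) - sin (2*a))) (at t within S)" for t S
  proof -
    have "(f has_real_derivative (2 * sin (a+t) * cos (a+t) - sin (2*a))) (at t within S)"
      unfolding f_def by (auto intro!: derivative_eq_intros simp: power2_eq_square)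
    moreover have "2 * sin (a+t) * cos (a+t) = sin (2*a + 2*t)"
      using sin_double[of "a+t"] by (simp add: algebra_simps)
    ultimately show ?thesis by simp
  qed
  have "\<bar>f b - f 0\<bar> \<le> (2 * \<bar>b\<bar>) * \<bar>b - 0\<bar>"
  proof (rule field_differentiable_bound[where S="closed_segment 0 b", unfolded real_norm_def])
    fix z assume "z \<in> closed_segment 0 b"
    then have "\<bar>z\<bar> \<le> \<bar>b\<bar>" by (auto simp: closed_segment_eq_real_ivl split: if_splits)
    then show "\<bar>sin (2*a + 2*z) - sin (2*a)\<bar> \<le> 2 * \<bar>b\<bar>"
      using abs_sin_diff_le[of "2*a + 2*z" "2*a"] by simp
  qed (use D in auto)
  then show ?thesis by (simp add: f_def power2_eq_square abs_mult[symmetric])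
qed

lemma sin_square_diff: "(sin (a::real))\<^sup>2 - (sin b)\<^sup>2 = sin (a + b) * sin (a - b)"
proof -
  have e1: "cos (2*a) = 1 - 2*(sin a)\<^sup>2" by (rule cos_double_sin)
  have e2: "cos (2*b) = 1 - 2*(sin b)\<^sup>2" by (rule cos_double_sin)
  have "(sin a)\<^sup>2 - (sin b)\<^sup>2 = (cos (2*b) - cos (2*a))/2" using e1 e2 by simp
  also have "\<dots> = (cos ((a+b) - (a-b)) - cos ((a+b) + (a-b)))/2"
  proof -
    have "2*b = (a+b) - (a-b)" "2*a = (a+b) + (a-b)" by simp_all
    then show ?thesis by metis
  qed
  also have "\<dots> = sin (a + b) * sin (a - b)"
    by (simp only: cos_add cos_diff) simp
  finally show ?thesis .
qed

lemma abs_sin_square_diff_le: "\<bar>(sin (a::real))\<^sup>2 - (sin b)\<^sup>2\<bar> \<le> \<bar>a - b\<bar>"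
proof -
  have "\<bar>(sin a)\<^sup>2 - (sin b)\<^sup>2\<bar> = \<bar>sin (a + b)\<bar> * \<bar>sin (a - b)\<bar>"
    by (simp add: sin_square_diff abs_mult)
  also have "\<dots> \<le> 1 * \<bar>a - b\<bar>"
    by (intro mult_mono abs_sin_le_one abs_sin_x_le_abs_x) auto
  finally show ?thesis by simp
qed

lemma Jordan_inequality: assumes "0 \<le> t" "t \<le> pi/2" shows "2 * t / pi \<le> sin t"
proof (rule ccontr)
  assume neg: "\<not> 2 * t / pi \<le> sin t"
  define f where "f x = sin x - 2 * x / pi" for x
  have ft: "f t < 0" using neg by (simp add: f_def)
  have D: "DERIV f x :> cos x - 2 / pi" for x
    unfolding f_def by (auto intro!: derivative_eq_intros)
  have t0: "0 < t" using ft assms by (cases "t = 0") (auto simp: f_def)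
  have t1: "t < pi/2" using ft assms by (cases "t = pi/2") (auto simp: f_def)
  obtain z1 where z1: "0 < z1" "z1 < t" "f t - f 0 = (t - 0) * (cos z1 - 2/pi)"
    using MVT2[OF t0, of f "\<lambda>x. cos x - 2/pi"] D by blast
  obtain z2 where z2: "t < z2" "z2 < pi/2" "f (pi/2) - f t = (pi/2 - t) * (cos z2 - 2/pi)"
    using MVT2[OF t1, of f "\<lambda>x. cos x - 2/pi"] D by blast
  have "f 0 = 0" "f (pi/2) = 0" by (auto simp: f_def)
  have n1: "cos z1 - 2/pi < 0"
  proof -
    have "t * (cos z1 - 2/pi) < 0" using z1 ft \<open>f 0 = 0\<close> by simp
    then show ?thesis using t0 by (simp add: mult_less_0_iff)
  qed
  have p2: "cos z2 - 2/pi > 0"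
  proof -
    have "(pi/2 - t) * (cos z2 - 2/pi) > 0" using z2 ft \<open>f (pi/2) = 0\<close> by simp
    then show ?thesis using t1 by (simp add: zero_less_mult_iff)
  qed
  have "cos z2 \<le> cos z1" using z1 z2 t1 by (subst cos_mono_le_eq) auto
  then show False using n1 p2 by simp
qed

lemma cos_le_chord: assumes "pi/2 \<le> th" "th \<le> pi" shows "cos th \<le> 1 - 2 * th / pi"
proof -
  have "2 * (th - pi/2) / pi \<le> sin (th - pi/2)" by (rule Jordan_inequality) (use assms in auto)
  moreover have "sin (th - pi/2) = - cos th" by (simp add: sin_diff)
  moreover have "2 * (th - pi/2) / pi = 2 * th / pi - 1" by (simp add: field_simps)
  ultimately show ?thesis by simp
qed

lemma sin_double_arctan: "sin (2 * arctan t) = 2 * t / (1 + t\<^sup>2)"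
proof -
  have p: "0 < 1 + t\<^sup>2" by (simp add: add_pos_nonneg)
  have "sin (2 * arctan t) = 2 * (t / sqrt (1 + t\<^sup>2)) * (1 / sqrt (1 + t\<^sup>2))"
    by (simp add: sin_double sin_arctan cos_arctan)
  also have "\<dots> = 2 * t / (sqrt (1 + t\<^sup>2) * sqrt (1 + t\<^sup>2))" by simp
  also have "sqrt (1 + t\<^sup>2) * sqrt (1 + t\<^sup>2) = 1 + t\<^sup>2" using p by simp
  finally show ?thesis .
qed

lemma kink_has_real_derivative:
  assumes "\<beta> > 0"
  shows "((\<lambda>x. 2 * arctan (exp ((x - c) / \<beta>))) has_real_derivative sin (2 * arctan (exp ((x - c) / \<beta>))) / \<beta>) (at x)"
proof -
  define e where "e = exp ((x - c) / \<beta>)"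
  have "((\<lambda>x. 2 * arctan (exp ((x - c) / \<beta>))) has_real_derivative 2 * (inverse (1 + e\<^sup>2) * (e * (1 / \<beta>)))) (at x)"
    unfolding e_def using assms
    by (auto intro!: derivative_eq_intros DERIV_arctan[THEN DERIV_chain2])
  moreover have "2 * (inverse (1 + e\<^sup>2) * (e * (1 / \<beta>))) = sin (2 * arctan e) / \<beta>"
    unfolding sin_double_arctan using assms by (simp add: field_simps)
  ultimately show ?thesis unfolding e_def by metis
qed

lemma arctan_exp_reflect: "2 * arctan (exp M) = pi - 2 * arctan (exp (- M))"
proof -
  have "arctan (1 / exp M) = sgn (exp M) * pi/2 - arctan (exp M)" by (rule Transcendental.arctan_inverse) simp
  then show ?thesis by (simp add: exp_minus inverse_eq_divide)
qed

lemma exp_8_ge_81: "81 \<le> exp (8::real)"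
proof -
  have "3 \<le> exp (2::real)" using exp_ge_add_one_self[of 2] by simp
  then have "3 ^ 4 \<le> exp (2::real) ^ 4" by (intro power_mono) auto
  also have "exp (2::real) ^ 4 = exp 8" by (simp add: exp_of_nat_mult[symmetric])
  finally show ?thesis by simp
qed

lemma arctan_exp_neg_8_le: "2 * arctan (exp (- 8)) \<le> 2 / (81::real)"
proof -
  have "arctan (exp (- 8)) \<le> exp (- 8::real)" by (rule arctan_le_self) simp
  also have "exp (- 8::real) = 1 / exp 8" by (simp add: exp_minus inverse_eq_divide)
  also have "\<dots> \<le> 1 / 81" using exp_8_ge_81 by (intro divide_left_mono) auto
  finally show ?thesis by simp
qed

lemma nonneg_quadratic_imp_linear_coeff_zero:
  fixes L K :: real
  assumes "\<And>e. 0 \<le> e * L + e\<^sup>2 * K"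
  shows "L = 0"
proof (rule ccontr)
  assume L: "L \<noteq> 0"
  define M where "M = \<bar>K\<bar> + 1"
  have M: "M > 0" "\<bar>K\<bar> < M" unfolding M_def by auto
  define e where "e = - L / M"
  have "e * L + e\<^sup>2 * K \<le> e * L + e\<^sup>2 * \<bar>K\<bar>"
    by (intro add_left_mono mult_left_mono) auto
  also have "\<dots> = L\<^sup>2 / M\<^sup>2 * (\<bar>K\<bar> - M)"
    unfolding e_def using M by (simp add: power2_eq_square field_simps)
  also have "\<dots> < 0"
    using L M by (intro mult_pos_neg) auto
  finally show False using assms[of e] by linarith
qed

section \<open>The Euler-Lagrange equation\<close>

lemma integral_square_add_indicator:
  assumes hg: "has_H1_deriv phi g" and s: "s \<in> {0..1}"
  shows "integral {0..1} (\<lambda>x. (g x + e * indicator {..s} x)\<^sup>2)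
    = integral {0..1} (\<lambda>x. (g x)\<^sup>2) + 2 * e * (phi s - phi 0) + e\<^sup>2 * s"
proof -
  define k where "k = (\<lambda>x. indicator {..s} x :: real)"
  have hk: "has_H1_deriv (\<lambda>x. min x s) k" unfolding k_def by (rule has_H1_deriv_min[OF s])
  have gk_int: "(\<lambda>x. g x * k x) integrable_on {0..1}"
    using hg hk unfolding has_H1_deriv_def
    by (intro set_borel_integral_eq_integral(1) set_integrable_mult_of_square_integrable) blast+
  have "integral {0..1} (\<lambda>x. g x * k x) = integral {0..1} (\<lambda>x. if x \<in> {..s} then g x else 0)"
    by (rule arg_cong[where f="integral {0..1}"]) (auto simp: k_def indicator_def)
  also have "\<dots> = integral ({..s} \<inter> {0..1}) g" by (rule integral_restrict_Int)
  also have "{..s} \<inter> {0..1} = {0..s}" using s by auto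
  finally have igk: "integral {0..1} (\<lambda>x. g x * k x) = phi s - phi 0"
    using has_H1_derivD(3)[OF hg s] by simp
  have "integral {0..1} (\<lambda>x. (k x)\<^sup>2) = integral {0..1} (\<lambda>x. if x \<in> {..s} then 1 else 0::real)"
    by (rule arg_cong[where f="integral {0..1}"]) (auto simp: k_def indicator_def)
  also have "\<dots> = integral ({..s} \<inter> {0..1}) (\<lambda>x. 1::real)" by (rule integral_restrict_Int)
  also have "{..s} \<inter> {0..1} = {0..s}" using s by auto
  finally have ikk: "integral {0..1} (\<lambda>x. (k x)\<^sup>2) = s" using s by simp
  have i1: "(\<lambda>x. (2*e) * (g x * k x)) integrable_on {0..1}"
    using integrable_on_cmult_left[OF gk_int, of "2*e"] by simp
  have i2: "(\<lambda>x. e\<^sup>2 * (k x)\<^sup>2) integrable_on {0..1}"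
    using integrable_on_cmult_left[OF has_H1_derivD(2)[OF hk], of "e\<^sup>2"] by simp
  have "integral {0..1} (\<lambda>x. (g x + e * k x)\<^sup>2)
      = integral {0..1} (\<lambda>x. (g x)\<^sup>2 + ((2*e) * (g x * k x) + e\<^sup>2 * (k x)\<^sup>2))"
    by (rule arg_cong[where f="integral {0..1}"]) (auto simp: power2_eq_square algebra_simps)
  also have "\<dots> = integral {0..1} (\<lambda>x. (g x)\<^sup>2)
      + ((2*e) * integral {0..1} (\<lambda>x. g x * k x) + e\<^sup>2 * integral {0..1} (\<lambda>x. (k x)\<^sup>2))"
    using integral_add[OF has_H1_derivD(2)[OF hg] integrable_add[OF i1 i2]] integral_add[OF i1 i2]
    by simp
  finally show ?thesis unfolding k_def[symmetric] igk ikk by simp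
qed

lemma integral_sin_square_perturbation_le:
  fixes phi eta :: "real \<Rightarrow> real"
  assumes cp: "continuous_on {0..1} phi" and ce: "continuous_on {0..1} eta"
  shows "integral {0..1} (\<lambda>x. (sin (phi x + e * eta x))\<^sup>2)
    \<le> integral {0..1} (\<lambda>x. (sin (phi x))\<^sup>2) + e * integral {0..1} (\<lambda>x. sin (2 * phi x) * eta x)
      + 2 * e\<^sup>2 * integral {0..1} (\<lambda>x. (eta x)\<^sup>2)"
proof -
  have "integral {0..1} (\<lambda>x. (sin (phi x + e * eta x))\<^sup>2)
       \<le> integral {0..1} (\<lambda>x. (sin (phi x))\<^sup>2 + e * (sin (2 * phi x) * eta x) + 2 * e\<^sup>2 * (eta x)\<^sup>2)"
  proof (rule integral_le)
    show "(\<lambda>x. (sin (phi x + e * eta x))\<^sup>2) integrable_on {0..1}"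
      by (intro integrable_continuous_interval continuous_intros cp ce)
    show "(\<lambda>x. (sin (phi x))\<^sup>2 + e * (sin (2 * phi x) * eta x) + 2 * e\<^sup>2 * (eta x)\<^sup>2) integrable_on {0..1}"
      by (intro integrable_continuous_interval continuous_intros cp ce)
    show "(sin (phi x + e * eta x))\<^sup>2 \<le> (sin (phi x))\<^sup>2 + e * (sin (2 * phi x) * eta x) + 2 * e\<^sup>2 * (eta x)\<^sup>2" for x
      using sin_add_square_le[of "phi x" "e * eta x"] by (simp add: power2_eq_square algebra_simps)
  qed
  also have "\<dots> = integral {0..1} (\<lambda>x. (sin (phi x))\<^sup>2) + e * integral {0..1} (\<lambda>x. sin (2 * phi x) * eta x)
      + 2 * e\<^sup>2 * integral {0..1} (\<lambda>x. (eta x)\<^sup>2)"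
    by (subst integral_add, (intro integrable_continuous_interval continuous_intros cp ce)+,
        subst integral_add, (intro integrable_continuous_interval continuous_intros cp ce)+, simp)
  finally show ?thesis .
qed

lemma minimizer_Euler_Lagrange:
  assumes min: "is_minimizer \<beta> \<kappa> phi" and hg: "has_H1_deriv phi g" and z: "phi 0 = 0"
    and s: "s \<in> {0..1}" and b: "\<beta> \<noteq> 0"
  shows "phi s = 2 * \<kappa> * s - 1/(2*\<beta>\<^sup>2) * integral {0..1} (\<lambda>x. sin (2 * phi x) * min x s)"
proof -
  define eta where "eta = (\<lambda>x::real. min x s)"
  define k where "k = (\<lambda>x. indicator {..s} x :: real)"
  have hk: "has_H1_deriv eta k" unfolding eta_def k_def by (rule has_H1_deriv_min[OF s])
  have e0: "eta 0 = 0" "eta 1 = s" using s by (auto simp: eta_def)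
  define Ig where "Ig = integral {0..1} (\<lambda>x. (g x)\<^sup>2)"
  define Is where "Is = integral {0..1} (\<lambda>x. (sin (phi x))\<^sup>2)"
  define Q where "Q = integral {0..1} (\<lambda>x. sin (2 * phi x) * eta x)"
  define N where "N = integral {0..1} (\<lambda>x. (eta x)\<^sup>2)"
  define L where "L = phi s / 4 + Q / (8*\<beta>\<^sup>2) - \<kappa> * s / 2"
  define K where "K = (s + 2 * N / \<beta>\<^sup>2) / 8"
  have Fphi: "F_energy \<beta> \<kappa> phi g = 1/8 * (Ig + Is / \<beta>\<^sup>2) - \<kappa>/2 * phi 1"
    using F_energy_eq[OF hg] z unfolding Ig_def Is_def by simp
  have "0 \<le> e * L + e\<^sup>2 * K" for e
  proof -
    have hpsi: "has_H1_deriv (\<lambda>x. phi x + e * eta x) (\<lambda>x. g x + e * k x)"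
      by (rule has_H1_deriv_add_scaled[OF hg hk])
    then have "(\<lambda>x. phi x + e * eta x) \<in> J_class" using J_classI z e0 by simp
    then have le: "F_energy \<beta> \<kappa> phi g \<le> F_energy \<beta> \<kappa> (\<lambda>x. phi x + e * eta x) (\<lambda>x. g x + e * k x)"
      using min hg hpsi unfolding is_minimizer_def by blast
    have "F_energy \<beta> \<kappa> (\<lambda>x. phi x + e * eta x) (\<lambda>x. g x + e * k x)
         = 1/8 * ((Ig + 2 * e * phi s + e\<^sup>2 * s) + integral {0..1} (\<lambda>x. (sin (phi x + e * eta x))\<^sup>2) / \<beta>\<^sup>2)
           - \<kappa>/2 * (phi 1 + e * s)"
      using F_energy_eq[OF hpsi] integral_square_add_indicator[OF hg s, of e] z e0
      unfolding Ig_def k_def by (simp add: algebra_simps)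
    also have "\<dots> \<le> 1/8 * ((Ig + 2 * e * phi s + e\<^sup>2 * s) + (Is + e * Q + 2 * e\<^sup>2 * N) / \<beta>\<^sup>2)
           - \<kappa>/2 * (phi 1 + e * s)"
      using integral_sin_square_perturbation_le[OF has_H1_derivD(4)[OF hg] has_H1_derivD(4)[OF hk]]
      unfolding Is_def Q_def N_def by (intro diff_right_mono mult_left_mono add_left_mono divide_right_mono) auto
    also have "\<dots> = F_energy \<beta> \<kappa> phi g + (e * L + e\<^sup>2 * K)"
      unfolding Fphi L_def K_def using b by (simp add: field_simps power2_eq_square)
    finally show ?thesis using le by linarith
  qed
  then have "L = 0" by (rule nonneg_quadratic_imp_linear_coeff_zero)
  then show ?thesis unfolding L_def Q_def eta_def using b by (simp add: field_simps)
qed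

lemma integral_mult_min_eq:
  fixes q :: "real \<Rightarrow> real"
  assumes cq: "continuous_on {0..1} q" and s: "s \<in> {0..1}"
  shows "integral {0..1} (\<lambda>x. q x * min x s) = integral {0..s} (\<lambda>x. x * q x) + s * integral {s..1} q"
proof -
  have "(\<lambda>x. q x * min x s) integrable_on {0..1}"
    by (intro integrable_continuous_interval continuous_intros cq)
  then have "integral {0..1} (\<lambda>x. q x * min x s)
      = integral {0..s} (\<lambda>x. q x * min x s) + integral {s..1} (\<lambda>x. q x * min x s)"
    using Henstock_Kurzweil_Integration.integral_combine[where a=0 and c=s and b=1] s by (metis atLeastAtMost_iff)
  also have "integral {0..s} (\<lambda>x. q x * min x s) = integral {0..s} (\<lambda>x. x * q x)"
    by (rule integral_cong) (auto simp: min_def)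
  also have "integral {s..1} (\<lambda>x. q x * min x s) = integral {s..1} (\<lambda>x. s * q x)"
    by (rule integral_cong) (auto simp: min_def)
  finally show ?thesis by simp
qed

lemma integrated_ode_has_derivative:
  fixes phi q :: "real \<Rightarrow> real"
  assumes cq: "continuous_on {0..1} q"
    and rep: "\<And>s. s \<in> {0..1} \<Longrightarrow> phi s = a * s - c * integral {0..1} (\<lambda>x. q x * min x s)"
    and s: "s \<in> {0..1}"
  shows "(phi has_real_derivative a - c * integral {s..1} q) (at s within {0..1})"
proof -
  have cxq: "continuous_on {0..1} (\<lambda>x. x * q x)" by (intro continuous_intros cq)
  have "((\<lambda>s. a * s - c * (integral {0..s} (\<lambda>x. x * q x) + s * integral {s..1} q)) has_real_derivative
      a * 1 - c * (s * q s + (s * - q s + 1 * integral {s..1} q))) (at s within {0..1})"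
    by (intro DERIV_diff DERIV_cmult DERIV_add DERIV_mult' DERIV_ident
        integral_has_real_derivative[OF cxq s] integral_has_real_derivative'[OF cq s])
  then have "((\<lambda>s. a * s - c * (integral {0..s} (\<lambda>x. x * q x) + s * integral {s..1} q)) has_real_derivative
      a - c * integral {s..1} q) (at s within {0..1})"
    by (simp add: algebra_simps)
  then show ?thesis
    by (rule has_field_derivative_transform_within[where d=1]) (use s rep integral_mult_min_eq[OF cq] in auto)
qed

lemma minimizer_Euler_Lagrange_ode:
  fixes phi :: "real \<Rightarrow> real"
  assumes b: "0 < \<beta>" and min: "is_minimizer \<beta> \<kappa> phi"
  obtains P where "\<And>x. x \<in> {0..1} \<Longrightarrow> (phi has_real_derivative P x) (at x within {0..1})"
    and "\<And>x. x \<in> {0..1} \<Longrightarrow> (P has_real_derivative sin (2 * phi x) / (2*\<beta>\<^sup>2)) (at x within {0..1})"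
    and "P 1 = 2 * \<kappa>"
proof
  obtain g where hg: "has_H1_deriv phi g" and z: "phi 0 = 0"
    using min unfolding is_minimizer_def J_class_def H1_def by blast
  have cq: "continuous_on {0..1} (\<lambda>x. sin (2 * phi x))"
    by (intro continuous_intros has_H1_derivD(4)[OF hg])
  define P where "P x = 2 * \<kappa> - 1/(2*\<beta>\<^sup>2) * integral {x..1} (\<lambda>x. sin (2 * phi x))" for x
  show "(phi has_real_derivative P x) (at x within {0..1})" if "x \<in> {0..1}" for x
    unfolding P_def using b
    by (intro integrated_ode_has_derivative[OF cq _ that] minimizer_Euler_Lagrange[OF min hg z]) auto
  show "(P has_real_derivative sin (2 * phi x) / (2*\<beta>\<^sup>2)) (at x within {0..1})" if "x \<in> {0..1}" for x
  proof -
    have "(P has_real_derivative 0 - 1/(2*\<beta>\<^sup>2) * - sin (2 * phi x)) (at x within {0..1})"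
      unfolding P_def by (intro DERIV_diff DERIV_cmult DERIV_const integral_has_real_derivative'[OF cq that])
    then show ?thesis by simp
  qed
  show "P 1 = 2 * \<kappa>" by (simp add: P_def)
qed

lemma first_integral_constant:
  fixes phi P :: "real \<Rightarrow> real"
  assumes d1: "\<And>s. s \<in> {0..1} \<Longrightarrow> (phi has_real_derivative P s) (at s within {0..1})"
    and d2: "\<And>s. s \<in> {0..1} \<Longrightarrow> (P has_real_derivative sin (2 * phi s) / (2*\<beta>\<^sup>2)) (at s within {0..1})"
    and b: "\<beta> \<noteq> 0"
  shows "\<exists>C. \<forall>s\<in>{0..1}. (P s)\<^sup>2 - (sin (phi s))\<^sup>2 / \<beta>\<^sup>2 = C"
proof (rule has_field_derivative_zero_constant)
  fix s :: real assume s: "s \<in> {0..1}"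
  have "((\<lambda>s. (P s)\<^sup>2 - (sin (phi s))\<^sup>2 / \<beta>\<^sup>2) has_real_derivative
     2 * P s * (sin (2 * phi s) / (2*\<beta>\<^sup>2)) - 2 * sin (phi s) * (cos (phi s) * P s) / \<beta>\<^sup>2) (at s within {0..1})"
    using d1[OF s] d2[OF s] b by (auto intro!: derivative_eq_intros simp: power2_eq_square)
  moreover have "2 * P s * (sin (2 * phi s) / (2*\<beta>\<^sup>2)) - 2 * sin (phi s) * (cos (phi s) * P s) / \<beta>\<^sup>2 = 0"
    using b sin_double[of "phi s"] by (simp add: field_simps)
  ultimately show "((\<lambda>s. (P s)\<^sup>2 - (sin (phi s))\<^sup>2 / \<beta>\<^sup>2) has_field_derivative 0) (at s within {0..1})"
    by metis
qed simp

section \<open>Monotonicity and uniqueness for first order equations\<close>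

lemma DERIV_nonneg_within_imp_le:
  fixes f f' :: "real \<Rightarrow> real"
  assumes ab: "a \<le> b" "p \<le> a" "b \<le> q"
    and d: "\<And>x. x \<in> {p..q} \<Longrightarrow> (f has_real_derivative f' x) (at x within {p..q})"
    and nn: "\<And>x. x \<in> {a..b} \<Longrightarrow> f' x \<ge> 0"
  shows "f a \<le> f b"
proof (rule DERIV_nonneg_imp_increasing_open[OF ab(1)])
  fix x assume x: "a < x" "x < b"
  then have "x \<in> interior {p..q}" using ab by auto
  then have "(f has_real_derivative f' x) (at x)"
    using d[of x] x ab at_within_interior[of x "{p..q}"] by auto
  then show "\<exists>y. DERIV f x :> y \<and> y \<ge> 0" using nn[of x] x by auto
next
  show "continuous_on {a..b} f"
    using DERIV_continuous_on[OF d] by (rule continuous_on_subset) (use ab in auto)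
qed

lemma DERIV_pos_within_imp_less:
  fixes f f' :: "real \<Rightarrow> real"
  assumes ab: "a < b" "p \<le> a" "b \<le> q"
    and d: "\<And>x. x \<in> {p..q} \<Longrightarrow> (f has_real_derivative f' x) (at x within {p..q})"
    and nn: "\<And>x. x \<in> {a..b} \<Longrightarrow> f' x > 0"
  shows "f a < f b"
proof (rule DERIV_pos_imp_increasing_open[OF ab(1)])
  fix x assume x: "a < x" "x < b"
  then have "x \<in> interior {p..q}" using ab by auto
  then have "(f has_real_derivative f' x) (at x)"
    using d[of x] x ab at_within_interior[of x "{p..q}"] by auto
  then show "\<exists>y. DERIV f x :> y \<and> y > 0" using nn[of x] x by auto
next
  show "continuous_on {a..b} f"
    using DERIV_continuous_on[OF d] by (rule continuous_on_subset) (use ab in auto)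
qed

lemma Gronwall_zero_right:
  fixes w W :: "real \<Rightarrow> real"
  assumes ax: "p \<le> a" "a \<le> x" "x \<le> q"
    and dw: "\<And>t. t \<in> {p..q} \<Longrightarrow> (w has_real_derivative W t) (at t within {p..q})"
    and growth: "\<And>t. t \<in> {p..q} \<Longrightarrow> w t * W t \<le> L * (w t)\<^sup>2"
    and init: "w a = 0"
  shows "w x = 0"
proof -
  define u where "u t = - ((w t)\<^sup>2 * exp (- 2 * L * t))" for t
  have du: "(u has_real_derivative 2 * exp (- 2 * L * t) * (L * (w t)\<^sup>2 - w t * W t)) (at t within {p..q})"
    if "t \<in> {p..q}" for t
    unfolding u_def using dw[OF that]
    by (auto intro!: derivative_eq_intros simp: power2_eq_square algebra_simps)
  have "u a \<le> u x"
    by (rule DERIV_nonneg_within_imp_le[OF ax(2,1,3) du]) (use growth ax in auto)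
  then have "(w x)\<^sup>2 * exp (- 2 * L * x) \<le> 0" unfolding u_def using init by simp
  then show ?thesis by (simp add: mult_le_0_iff)
qed

lemma Gronwall_zero_left:
  fixes w W :: "real \<Rightarrow> real"
  assumes xa: "p \<le> x" "x \<le> a" "a \<le> q"
    and dw: "\<And>t. t \<in> {p..q} \<Longrightarrow> (w has_real_derivative W t) (at t within {p..q})"
    and growth: "\<And>t. t \<in> {p..q} \<Longrightarrow> - (L * (w t)\<^sup>2) \<le> w t * W t"
    and init: "w a = 0"
  shows "w x = 0"
proof -
  define v where "v t = (w t)\<^sup>2 * exp (2 * L * t)" for t
  have dv: "(v has_real_derivative 2 * exp (2 * L * t) * (w t * W t + L * (w t)\<^sup>2)) (at t within {p..q})"
    if "t \<in> {p..q}" for t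
    unfolding v_def using dw[OF that]
    by (auto intro!: derivative_eq_intros simp: power2_eq_square algebra_simps)
  have "v x \<le> v a"
  proof (rule DERIV_nonneg_within_imp_le[OF xa(2,1,3) dv])
    fix t assume "t \<in> {x..a}"
    then have "- (L * (w t)\<^sup>2) \<le> w t * W t" using growth xa by auto
    then show "0 \<le> 2 * exp (2 * L * t) * (w t * W t + L * (w t)\<^sup>2)" by simp
  qed
  then have "(w x)\<^sup>2 * exp (2 * L * x) \<le> 0" unfolding v_def using init by simp
  then show ?thesis by (simp add: mult_le_0_iff)
qed

lemma Lipschitz_ode_solutions_eq:
  fixes y1 y2 D1 D2 :: "real \<Rightarrow> real"
  assumes pa: "p \<le> a" "a \<le> q"
    and d1: "\<And>x. x \<in> {p..q} \<Longrightarrow> (y1 has_real_derivative D1 x) (at x within {p..q})"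
    and d2: "\<And>x. x \<in> {p..q} \<Longrightarrow> (y2 has_real_derivative D2 x) (at x within {p..q})"
    and lip: "\<And>x. x \<in> {p..q} \<Longrightarrow> \<bar>D1 x - D2 x\<bar> \<le> L * \<bar>y1 x - y2 x\<bar>"
    and init: "y1 a = y2 a"
  shows "\<forall>x\<in>{p..q}. y1 x = y2 x"
proof
  fix x assume x: "x \<in> {p..q}"
  define w where "w t = y1 t - y2 t" for t
  have dw: "(w has_real_derivative D1 t - D2 t) (at t within {p..q})" if "t \<in> {p..q}" for t
    unfolding w_def using d1[OF that] d2[OF that] by (rule DERIV_diff)
  have "\<bar>w t * (D1 t - D2 t)\<bar> \<le> L * (w t)\<^sup>2" if "t \<in> {p..q}" for t
  proof -
    have "\<bar>w t * (D1 t - D2 t)\<bar> \<le> \<bar>w t\<bar> * (L * \<bar>w t\<bar>)"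
      unfolding abs_mult w_def using lip[OF that] by (intro mult_left_mono) auto
    also have "\<dots> = L * (w t)\<^sup>2" by (simp add: power2_eq_square abs_mult[symmetric])
    finally show ?thesis .
  qed
  then have growth: "w t * (D1 t - D2 t) \<le> L * (w t)\<^sup>2" "- (L * (w t)\<^sup>2) \<le> w t * (D1 t - D2 t)"
    if "t \<in> {p..q}" for t
    using that by (metis abs_le_iff minus_le_iff)+
  have "w a = 0" using init by (simp add: w_def)
  then have "w x = 0"
    using Gronwall_zero_right[OF pa(1) _ _ dw growth(1)] Gronwall_zero_left[OF _ _ pa(2) dw growth(2)] x
    by (cases "a \<le> x") auto
  then show "y1 x = y2 x" by (simp add: w_def)
qed

lemma autonomous_ode_unique:
  fixes phi u f :: "real \<Rightarrow> real"
  assumes pq: "0 \<le> p" "q \<le> 1" "p \<le> a" "a \<le> q"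
    and dphi: "\<And>s. s \<in> {0..1} \<Longrightarrow> (phi has_real_derivative f (phi s)) (at s within {0..1})"
    and du: "\<And>x. x \<in> {p..q} \<Longrightarrow> (u has_real_derivative f (u x)) (at x within {p..q})"
    and lip: "\<And>y1 y2. \<bar>f y1 - f y2\<bar> \<le> L * \<bar>y1 - y2\<bar>"
    and init: "phi a = u a"
  shows "\<forall>x\<in>{p..q}. phi x = u x"
proof (rule Lipschitz_ode_solutions_eq[of p a q phi "\<lambda>x. f (phi x)" u "\<lambda>x. f (u x)" L, OF pq(3,4)])
  fix x assume x: "x \<in> {p..q}"
  show "(phi has_real_derivative f (phi x)) (at x within {p..q})"
    by (rule has_field_derivative_subset[OF dphi]) (use x pq in auto)
  show "(u has_real_derivative f (u x)) (at x within {p..q})" by (rule du[OF x])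
  show "\<bar>f (phi x) - f (u x)\<bar> \<le> L * \<bar>phi x - u x\<bar>" by (rule lip)
qed (rule init)

lemma has_real_derivative_reflect:
  assumes "\<And>s. s \<in> {0..1} \<Longrightarrow> (phi has_real_derivative P s) (at s within {0..1})"
    and sub: "\<And>x. x \<in> S \<Longrightarrow> T - x \<in> {0..1}" and x: "x \<in> S"
  shows "((\<lambda>x. c - phi (T - x)) has_real_derivative P (T - x)) (at x within S)"
proof -
  have "(phi has_real_derivative P (T - x)) (at ((\<lambda>x. T - x) x) within ((\<lambda>x. T - x) ` S))"
    by (rule has_field_derivative_subset[OF assms(1)]) (use sub x in auto)
  moreover have "((\<lambda>x. T - x) has_real_derivative -1) (at x within S)"
    by (auto intro!: derivative_eq_intros)
  ultimately have "(phi \<circ> (\<lambda>x. T - x) has_real_derivative P (T - x) * -1) (at x within S)"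
    by (rule DERIV_image_chain)
  then have "((\<lambda>x. phi (T - x)) has_real_derivative - P (T - x)) (at x within S)"
    by (simp add: o_def)
  then show ?thesis by (auto intro!: derivative_eq_intros)
qed

lemma has_real_derivative_shift:
  assumes "\<And>s. s \<in> {0..1} \<Longrightarrow> (phi has_real_derivative P s) (at s within {0..1})"
    and sub: "\<And>x. x \<in> S \<Longrightarrow> x + T \<in> {0..1}" and x: "x \<in> S"
  shows "((\<lambda>x. phi (x + T) - c) has_real_derivative P (x + T)) (at x within S)"
proof -
  have "(phi has_real_derivative P (x + T)) (at ((\<lambda>x. x + T) x) within ((\<lambda>x. x + T) ` S))"
    by (rule has_field_derivative_subset[OF assms(1)]) (use sub x in auto)
  moreover have "((\<lambda>x. x + T) has_real_derivative 1) (at x within S)"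
    by (auto intro!: derivative_eq_intros)
  ultimately have "(phi \<circ> (\<lambda>x. x + T) has_real_derivative P (x + T) * 1) (at x within S)"
    by (rule DERIV_image_chain)
  then have "((\<lambda>x. phi (x + T)) has_real_derivative P (x + T)) (at x within S)"
    by (simp add: o_def)
  then show ?thesis by (auto intro!: derivative_eq_intros)
qed

lemma autonomous_ode_reflection_symmetric:
  fixes phi f :: "real \<Rightarrow> real"
  assumes dphi: "\<And>s. s \<in> {0..1} \<Longrightarrow> (phi has_real_derivative f (phi s)) (at s within {0..1})"
    and lip: "\<And>y1 y2. \<bar>f y1 - f y2\<bar> \<le> L * \<bar>y1 - y2\<bar>"
    and f_refl: "\<And>y. f (pi - y) = f y"
    and T: "0 < T / 2" "T / 2 < 1" and half: "phi (T / 2) = pi / 2"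
  shows "\<forall>x\<in>{max 0 (T - 1)..min 1 T}. phi x = pi - phi (T - x)"
proof (rule autonomous_ode_unique[OF _ _ _ _ dphi _ lip, where a="T/2"])
  show "0 \<le> max 0 (T - 1)" "min 1 T \<le> 1" "max 0 (T - 1) \<le> T/2" "T/2 \<le> min 1 T"
    using T by (auto simp: max_def min_def)
  show "phi (T/2) = pi - phi (T - T/2)" using half by simp
  fix x assume x: "x \<in> {max 0 (T - 1)..min 1 T}"
  have "((\<lambda>x. pi - phi (T - x)) has_real_derivative f (phi (T - x))) (at x within {max 0 (T - 1)..min 1 T})"
    by (rule has_real_derivative_reflect[OF dphi _ x]) auto
  then show "((\<lambda>x. pi - phi (T - x)) has_real_derivative f (pi - phi (T - x)))
      (at x within {max 0 (T - 1)..min 1 T})"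
    by (simp add: f_refl)
qed

lemma autonomous_ode_shift_periodic:
  fixes phi f :: "real \<Rightarrow> real"
  assumes dphi: "\<And>s. s \<in> {0..1} \<Longrightarrow> (phi has_real_derivative f (phi s)) (at s within {0..1})"
    and lip: "\<And>y1 y2. \<bar>f y1 - f y2\<bar> \<le> L * \<bar>y1 - y2\<bar>"
    and f_shift: "\<And>y. f (y + pi) = f y"
    and T: "0 \<le> T" "T \<le> 1" and start: "phi T = pi + phi 0"
  shows "\<forall>x\<in>{0..1 - T}. phi (x + T) = pi + phi x"
proof -
  have "\<forall>x\<in>{0..1 - T}. phi x = phi (x + T) - pi"
  proof (rule autonomous_ode_unique[OF _ _ _ _ dphi _ lip, where a=0])
    show "0 \<le> (0::real)" "1 - T \<le> 1" "0 \<le> (0::real)" "0 \<le> 1 - T" using T by auto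
    show "phi 0 = phi (0 + T) - pi" using start by simp
    fix x assume x: "x \<in> {0..1 - T}"
    have "((\<lambda>x. phi (x + T) - pi) has_real_derivative f (phi (x + T))) (at x within {0..1 - T})"
      by (rule has_real_derivative_shift[OF dphi _ x]) (use T in auto)
    then show "((\<lambda>x. phi (x + T) - pi) has_real_derivative f (phi (x + T) - pi)) (at x within {0..1 - T})"
      using f_shift[of "phi (x + T) - pi"] by simp
  qed
  then show ?thesis by force
qed

lemma zero_first_integral_imp_zero:
  fixes phi P :: "real \<Rightarrow> real"
  assumes b: "0 < \<beta>"
    and d: "\<And>s. s \<in> {0..1} \<Longrightarrow> (phi has_real_derivative P s) (at s within {0..1})"
    and z: "phi 0 = 0" and first: "\<And>s. s \<in> {0..1} \<Longrightarrow> (P s)\<^sup>2 = (sin (phi s))\<^sup>2 / \<beta>\<^sup>2"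
    and s: "s \<in> {0..1}"
  shows "phi s = 0"
proof -
  have "\<forall>x\<in>{0..1}. phi x = 0"
  proof (rule Lipschitz_ode_solutions_eq[of 0 0 1 phi P "\<lambda>_. 0" "\<lambda>_. 0" "1/\<beta>"])
    fix x :: real assume x: "x \<in> {0..1}"
    show "(phi has_real_derivative P x) (at x within {0..1})" by (rule d[OF x])
    have "\<bar>P x\<bar> = \<bar>sin (phi x)\<bar> / \<beta>"
      using first[OF x] b by (metis abs_divide abs_of_pos power_divide real_sqrt_abs)
    also have "\<dots> \<le> \<bar>phi x\<bar> / \<beta>" using b abs_sin_x_le_abs_x by (intro divide_right_mono) auto
    finally show "\<bar>P x - 0\<bar> \<le> 1 / \<beta> * \<bar>phi x - 0\<bar>" by simp
  qed (use z in auto)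
  then show ?thesis using s by blast
qed

lemma continuous_nonvanishing_pos:
  fixes P :: "real \<Rightarrow> real"
  assumes "continuous_on {a..b} P" "0 < P b" "\<And>x. x \<in> {a..b} \<Longrightarrow> P x \<noteq> 0" "s \<in> {a..b}"
  shows "0 < P s"
proof (rule ccontr)
  assume "\<not> 0 < P s"
  moreover have "continuous_on {s..b} P" using assms(1) by (rule continuous_on_subset) (use assms(4) in auto)
  ultimately obtain x where "s \<le> x" "x \<le> b" "P x = 0"
    using IVT'[of P s 0 b] assms(2,4) by auto
  then show False using assms(3)[of x] assms(4) by auto
qed

definition kink_speed :: "real \<Rightarrow> real \<Rightarrow> real \<Rightarrow> real" where
  "kink_speed \<beta> C y = sqrt (C + (sin y)\<^sup>2 / \<beta>\<^sup>2)"

lemma kink_speed_pi_minus [simp]: "kink_speed \<beta> C (pi - y) = kink_speed \<beta> C y"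
  and kink_speed_add_pi [simp]: "kink_speed \<beta> C (y + pi) = kink_speed \<beta> C y"
  by (simp_all add: kink_speed_def)

lemma kink_speed_pos: "0 < C \<Longrightarrow> 0 < kink_speed \<beta> C y"
  by (simp add: kink_speed_def add_pos_nonneg)

lemma kink_speed_Lipschitz:
  assumes C: "0 < C" and b: "0 < \<beta>"
  shows "\<bar>kink_speed \<beta> C y1 - kink_speed \<beta> C y2\<bar> \<le> 1 / (\<beta>\<^sup>2 * sqrt C) * \<bar>y1 - y2\<bar>"
proof -
  define f where "f = kink_speed \<beta> C"
  have fge: "sqrt C \<le> f y" for y unfolding f_def kink_speed_def using C by (intro real_sqrt_le_mono) auto
  have sC: "0 < sqrt C" using C by simp
  have fsq: "(f y)\<^sup>2 = C + (sin y)\<^sup>2 / \<beta>\<^sup>2" for y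
    unfolding f_def kink_speed_def using C by (simp add: add_pos_nonneg)
  have pos: "sqrt C \<le> f y1 + f y2" "0 < f y1 + f y2" using fge[of y1] fge[of y2] sC by linarith+
  have "(f y1 - f y2) * (f y1 + f y2) = ((sin y1)\<^sup>2 - (sin y2)\<^sup>2) / \<beta>\<^sup>2"
    using fsq[of y1] fsq[of y2] by (simp add: power2_eq_square algebra_simps diff_divide_distrib)
  then have "f y1 - f y2 = ((sin y1)\<^sup>2 - (sin y2)\<^sup>2) / \<beta>\<^sup>2 / (f y1 + f y2)"
    using pos by (metis nonzero_mult_div_cancel_right less_irrefl)
  then have "\<bar>f y1 - f y2\<bar> = \<bar>(sin y1)\<^sup>2 - (sin y2)\<^sup>2\<bar> / \<beta>\<^sup>2 / (f y1 + f y2)"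
    using pos by (simp add: abs_divide)
  also have "\<dots> \<le> \<bar>y1 - y2\<bar> / \<beta>\<^sup>2 / (f y1 + f y2)"
    using pos b by (intro divide_right_mono abs_sin_square_diff_le) auto
  also have "\<dots> \<le> \<bar>y1 - y2\<bar> / \<beta>\<^sup>2 / sqrt C"
    using pos sC mult_pos_pos[OF pos(2) sC] by (intro divide_left_mono) auto
  finally show ?thesis unfolding f_def by simp
qed

text \<open>The sign of \<open>\<phi>'\<close> is fixed by the natural boundary condition \<open>\<phi>'(1) = 2\<kappa> > 0\<close>.\<close>

lemma minimizer_kink_ode:
  fixes phi :: "real \<Rightarrow> real"
  assumes b: "0 < \<beta>" and k: "0 < \<kappa>" and min: "is_minimizer \<beta> \<kappa> phi"
    and s: "s \<in> {0..1}" "phi s \<noteq> 0"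
  shows "\<exists>C>0. \<forall>x\<in>{0..1}. (phi has_real_derivative kink_speed \<beta> C (phi x)) (at x within {0..1})"
proof -
  obtain P where d1: "\<And>x. x \<in> {0..1} \<Longrightarrow> (phi has_real_derivative P x) (at x within {0..1})"
    and d2: "\<And>x. x \<in> {0..1} \<Longrightarrow> (P has_real_derivative sin (2 * phi x) / (2*\<beta>\<^sup>2)) (at x within {0..1})"
    and P1: "P 1 = 2 * \<kappa>"
    using minimizer_Euler_Lagrange_ode[OF b min] by blast
  have z: "phi 0 = 0" using min by (simp add: is_minimizer_def J_class_def)
  obtain C where C: "\<And>x. x \<in> {0..1} \<Longrightarrow> (P x)\<^sup>2 - (sin (phi x))\<^sup>2 / \<beta>\<^sup>2 = C"
    using first_integral_constant[OF d1 d2] b by auto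
  have "C \<noteq> 0"
    using zero_first_integral_imp_zero[OF b d1 z _ s(1)] C s(2) by force
  moreover have "C = (P 0)\<^sup>2" using C[of 0] z by simp
  ultimately have Cpos: "0 < C" by simp
  have Ppos: "0 < P x" if "x \<in> {0..1}" for x
  proof (rule continuous_nonvanishing_pos[OF DERIV_continuous_on[OF d2] _ _ that])
    show "0 < P 1" using k P1 by simp
    show "P y \<noteq> 0" if "y \<in> {0..1}" for y
    proof -
      have "0 \<le> (sin (phi y))\<^sup>2 / \<beta>\<^sup>2" by simp
      then have "0 < (P y)\<^sup>2" using C[OF that] Cpos by linarith
      then show ?thesis by auto
    qed
  qed
  have "P x = kink_speed \<beta> C (phi x)" if x: "x \<in> {0..1}" for x
  proof -
    have "(P x)\<^sup>2 = C + (sin (phi x))\<^sup>2 / \<beta>\<^sup>2" using C[OF x] by simp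
    from real_sqrt_unique[OF this] show ?thesis
      using Ppos[OF x] unfolding kink_speed_def by simp
  qed
  then show ?thesis using Cpos d1 by auto
qed

section \<open>Energy comparison with a competitor\<close>

locale kink_competitor =
  fixes \<beta> :: real
  assumes bpos: "0 < \<beta>" and bsmall: "17 * \<beta> \<le> 1"
begin

text \<open>The competitor: \<open>kink\<close> solves \<open>\<phi>' = sin \<phi> / \<beta>\<close> with \<open>\<phi>(c) = \<pi>/2\<close>, so on \<open>[0, 2c]\<close> it
  goes from \<open>eps\<close> to \<open>\<pi> - eps\<close> with energy close to the Bogomolnyi value \<open>4/\<beta>\<close>; a linear
  correction of size \<open>eps\<close> fixes the endpoints to \<open>0\<close> and \<open>\<pi>\<close>. After a flat part at \<open>\<pi>\<close>, a
  ramp on \<open>[1 - \<beta>, 1]\<close> raises the value at 1 to \<open>\<pi> + 1/4\<close> at energy cost \<open>O(1/\<beta>)\<close> with a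
  small constant.\<close>

definition "c = 8 * \<beta>"
definition "eps = 2 * arctan (exp (- 8))"
definition "kink x = 2 * arctan (exp ((x - c) / \<beta>))"
definition "slope = (1/4::real)"
definition "psi_kink x = kink x + eps * (x / c - 1)"
definition "dpsi_kink x = sin (kink x) / \<beta> + eps / c"
definition "psi_ramp x = pi + slope * (x - (1 - \<beta>)) / \<beta>"
definition "psi x = (if x \<le> 2*c then psi_kink x else if x \<le> 1 - \<beta> then pi else psi_ramp x)"
definition "dpsi x = (if x \<le> 2*c then dpsi_kink x else if x \<le> 1 - \<beta> then 0 else slope / \<beta>)"

lemma c_pos: "0 < c" and c_le: "2 * c \<le> 1 - \<beta>" and c_eq: "c = 8 * \<beta>"
  using bpos bsmall by (auto simp: c_def)

lemma kink_0: "kink 0 = eps" and kink_2c: "kink (2*c) = pi - eps"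
proof -
  have "(0 - c) / \<beta> = - 8" using bpos by (simp add: c_def)
  then show "kink 0 = eps" by (simp add: kink_def eps_def)
  have "(2*c - c) / \<beta> = 8" using bpos by (simp add: c_def)
  then show "kink (2*c) = pi - eps" unfolding kink_def eps_def using arctan_exp_reflect[of 8] by simp
qed

lemma psi_kink_0: "psi_kink 0 = 0" and psi_kink_2c: "psi_kink (2*c) = pi"
  using kink_0 kink_2c c_pos by (auto simp: psi_kink_def)

lemma psi_ramp_ends: "psi_ramp (1 - \<beta>) = pi" "psi_ramp 1 = pi + slope"
  using bpos by (auto simp: psi_ramp_def)

lemma psi_0: "psi 0 = 0" and psi_1: "psi 1 = pi + 1/4"
  using psi_kink_0 c_pos c_le bpos psi_ramp_ends by (auto simp: psi_def slope_def)

lemma psi_kink_has_derivative: "(psi_kink has_real_derivative dpsi_kink x) (at x)"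
proof -
  have "((\<lambda>x. kink x + eps * (x / c - 1)) has_real_derivative sin (kink x) / \<beta> + eps * (1 / c - 0)) (at x)"
    unfolding kink_def by (intro DERIV_add DERIV_cmult DERIV_diff DERIV_const kink_has_real_derivative[OF bpos]
      DERIV_cdivide[where f="\<lambda>x. x", OF DERIV_ident, simplified] [[simproc del: divide_cancel_factor]])
  then show ?thesis unfolding psi_kink_def[abs_def] dpsi_kink_def by simp
qed

lemma psi_ramp_has_derivative: "(psi_ramp has_real_derivative slope / \<beta>) (at x)"
  unfolding psi_ramp_def[abs_def] using bpos by (auto intro!: derivative_eq_intros)

lemma continuous_psi: "continuous_on UNIV psi"
proof -
  have c1: "continuous_on UNIV psi_kink" using psi_kink_has_derivative
    by (metis DERIV_isCont continuous_at_imp_continuous_on)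
  have c3: "continuous_on UNIV psi_ramp" using psi_ramp_has_derivative
    by (metis DERIV_isCont continuous_at_imp_continuous_on)
  have inner: "continuous_on UNIV (\<lambda>x. if x \<le> 1 - \<beta> then pi else psi_ramp x)"
    by (rule continuous_on_cases_le[where h="\<lambda>x. x", simplified])
       (auto intro: continuous_on_subset[OF c3] simp: psi_ramp_ends)
  show ?thesis unfolding psi_def[abs_def]
    by (rule continuous_on_cases_le[where h="\<lambda>x. x", simplified])
       (auto intro: continuous_on_subset[OF c1] continuous_on_subset[OF inner] simp: psi_kink_2c c_le)
qed

lemma psi_has_derivative: assumes "y \<noteq> 2*c" "y \<noteq> 1 - \<beta>" shows "(psi has_real_derivative dpsi y) (at y)"
proof (cases "y < 2*c")
  case True
  have "(psi has_real_derivative dpsi_kink y) (at y)"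
    by (rule has_field_derivative_transform_within_open[OF psi_kink_has_derivative, of "{..<2*c}"])
       (use True in \<open>auto simp: psi_def\<close>)
  then show ?thesis using True by (simp add: dpsi_def)
next
  case F1: False
  show ?thesis
  proof (cases "y < 1 - \<beta>")
    case True
    have "((\<lambda>_. pi) has_real_derivative 0) (at y)" by simp
    then have "(psi has_real_derivative 0) (at y)"
      by (rule has_field_derivative_transform_within_open[of _ _ _ "{2*c<..<1-\<beta>}"])
         (use True F1 assms in \<open>auto simp: psi_def\<close>)
    then show ?thesis using True F1 assms by (simp add: dpsi_def)
  next
    case False
    have "(psi has_real_derivative slope / \<beta>) (at y)"
      by (rule has_field_derivative_transform_within_open[OF psi_ramp_has_derivative, of "{1-\<beta><..}"])
         (use False F1 assms c_le in \<open>auto simp: psi_def\<close>)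
    then show ?thesis using False F1 assms c_le by (simp add: dpsi_def)
  qed
qed

lemma dpsi_measurable: "dpsi \<in> borel_measurable lborel"
proof -
  have "dpsi_kink \<in> borel_measurable lborel" using psi_kink_has_derivative unfolding dpsi_kink_def kink_def by measurable
  then show ?thesis unfolding dpsi_def[abs_def] by measurable
qed

lemma eps_nonneg: "0 \<le> eps" and eps_le: "eps \<le> 2/81"
  using arctan_exp_neg_8_le unfolding eps_def by auto

lemma abs_dpsi_le: "\<bar>dpsi x\<bar> \<le> 1/\<beta> + eps / c + slope/\<beta>"
proof -
  have a: "\<bar>dpsi_kink x\<bar> \<le> 1/\<beta> + eps / c"
  proof -
    have "\<bar>dpsi_kink x\<bar> \<le> \<bar>sin (kink x)\<bar> / \<beta> + eps / c"
      unfolding dpsi_kink_def using abs_triangle_ineq[of "sin (kink x) / \<beta>" "eps / c"] bpos c_pos eps_nonneg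
      by (simp add: abs_divide)
    also have "\<bar>sin (kink x)\<bar> / \<beta> \<le> 1 / \<beta>" using bpos by (intro divide_right_mono) auto
    finally show ?thesis by simp
  qed
  have "0 \<le> slope/\<beta>" "0 \<le> eps/c" "0 \<le> 1/\<beta>" using bpos c_pos eps_nonneg by (auto simp: slope_def)
  then show ?thesis using a unfolding dpsi_def by auto
qed

lemma has_H1_deriv_psi: "has_H1_deriv psi dpsi"
proof -
  define B where "B = 1/\<beta> + eps / c + slope/\<beta>"
  have i1: "set_integrable lborel {0..1} dpsi"
    by (rule set_integrable_bounded_unit[OF dpsi_measurable abs_dpsi_le])
  have i2: "set_integrable lborel {0..1} (\<lambda>x. (dpsi x)\<^sup>2)"
  proof (rule set_integrable_bounded_unit[where B="B\<^sup>2"])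
    show "(\<lambda>x. (dpsi x)\<^sup>2) \<in> borel_measurable lborel" using dpsi_measurable by measurable
    fix x
    have "\<bar>dpsi x\<bar>\<^sup>2 \<le> B\<^sup>2" unfolding B_def by (rule power_mono[OF abs_dpsi_le]) simp
    then show "\<bar>(dpsi x)\<^sup>2\<bar> \<le> B\<^sup>2" by simp
  qed
  have r: "psi x = psi 0 + (LINT t:{0..x}|lborel. dpsi t)" if x: "x \<in> {0..1}" for x
  proof -
    have "set_integrable lborel {0..x} dpsi" by (rule set_integrable_subset[OF i1]) (use x in auto)
    then have e: "(LINT t:{0..x}|lborel. dpsi t) = integral {0..x} dpsi"
      by (rule set_borel_integral_eq_integral(2))
    have "(dpsi has_integral (psi x - psi 0)) {0..x}"
    proof (rule fundamental_theorem_of_calculus_interior_strong[where S="{2*c, 1-\<beta>}"])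
      show "finite {2*c, 1-\<beta>}" by simp
      show "0 \<le> x" using x by simp
      show "continuous_on {0..x} psi" using continuous_psi by (rule continuous_on_subset) simp
      fix y assume "y \<in> {0<..<x} - {2*c, 1-\<beta>}"
      then have "(psi has_real_derivative dpsi y) (at y)" using psi_has_derivative by auto
      then show "(psi has_vector_derivative dpsi y) (at y)"
        by (simp add: has_real_derivative_iff_has_vector_derivative)
    qed
    then have "integral {0..x} dpsi = psi x - psi 0" by (rule integral_unique)
    then show ?thesis using e by simp
  qed
  show ?thesis unfolding has_H1_deriv_def using i1 i2 r by blast
qed

lemma continuous_psi_kink: "continuous_on S psi_kink"
  using psi_kink_has_derivative by (metis DERIV_isCont continuous_at_imp_continuous_on)

lemma continuous_kink: "continuous_on S kink"
  unfolding kink_def[abs_def] using bpos by (intro continuous_intros) auto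

lemma continuous_dpsi_kink: "continuous_on S dpsi_kink"
  unfolding dpsi_kink_def[abs_def] using bpos c_pos by (intro continuous_intros continuous_kink) auto

lemma continuous_psi_ramp: "continuous_on S psi_ramp"
  using psi_ramp_has_derivative by (metis DERIV_isCont continuous_at_imp_continuous_on)

definition "dens x = (dpsi x)\<^sup>2 + (sin (psi x))\<^sup>2 / \<beta>\<^sup>2"
definition "dens_kink x = (dpsi_kink x)\<^sup>2 + (sin (psi_kink x))\<^sup>2 / \<beta>\<^sup>2"
definition "dens_ramp x = (slope / \<beta>)\<^sup>2 + (sin (psi_ramp x))\<^sup>2 / \<beta>\<^sup>2"

lemma continuous_dens_kink: "continuous_on S dens_kink"
  unfolding dens_kink_def[abs_def] using bpos by (intro continuous_intros continuous_dpsi_kink continuous_psi_kink) auto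

lemma continuous_dens_ramp: "continuous_on S dens_ramp"
  unfolding dens_ramp_def[abs_def] using bpos by (intro continuous_intros continuous_psi_ramp) auto

lemma integrable_dens_kink_part: "dens integrable_on {0..2*c}" and integral_dens_kink_part: "integral {0..2*c} dens = integral {0..2*c} dens_kink"
proof -
  have eq: "dens x = dens_kink x" if "x \<in> {0..2*c}" for x using that by (simp add: dens_def dens_kink_def dpsi_def psi_def)
  show "dens integrable_on {0..2*c}"
    by (rule integrable_spike_finite[where S="{}" and f=dens_kink]) (use eq integrable_continuous_interval[OF continuous_dens_kink] in auto)
  show "integral {0..2*c} dens = integral {0..2*c} dens_kink" by (rule integral_cong) (rule eq)
qed

lemma integrable_dens_flat_part: "dens integrable_on {2*c..1-\<beta>}" and integral_dens_flat_part: "integral {2*c..1-\<beta>} dens = 0"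
proof -
  have eq: "dens x = 0" if "x \<in> {2*c..1-\<beta>} - {2*c}" for x using that by (simp add: dens_def dpsi_def psi_def)
  show "dens integrable_on {2*c..1-\<beta>}"
    by (rule integrable_spike_finite[where S="{2*c}" and f="\<lambda>_. 0"]) (use eq in auto)
  have "integral {2*c..1-\<beta>} dens = integral {2*c..1-\<beta>} (\<lambda>_. 0::real)"
    by (rule integral_spike[where S="{2*c}"]) (use eq in auto)
  then show "integral {2*c..1-\<beta>} dens = 0" by simp
qed

lemma integrable_dens_ramp_part: "dens integrable_on {1-\<beta>..1}" and integral_dens_ramp_part: "integral {1-\<beta>..1} dens = integral {1-\<beta>..1} dens_ramp"
proof -
  have eq: "dens x = dens_ramp x" if "x \<in> {1-\<beta>..1} - {1-\<beta>}" for x using that c_le by (simp add: dens_def dens_ramp_def dpsi_def psi_def)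
  show "dens integrable_on {1-\<beta>..1}"
    by (rule integrable_spike_finite[where S="{1-\<beta>}" and f=dens_ramp]) (use eq integrable_continuous_interval[OF continuous_dens_ramp] in auto)
  show "integral {1-\<beta>..1} dens = integral {1-\<beta>..1} dens_ramp"
    by (rule integral_spike[where S="{1-\<beta>}"]) (use eq in auto)
qed

lemma integral_dens_ramp_le: "integral {1-\<beta>..1} dens_ramp \<le> 2 * slope\<^sup>2 / \<beta>"
proof -
  have "integral {1-\<beta>..1} dens_ramp \<le> integral {1-\<beta>..1} (\<lambda>_. 2 * slope\<^sup>2 / \<beta>\<^sup>2)"
  proof (rule integral_le)
    show "dens_ramp integrable_on {1-\<beta>..1}" by (rule integrable_continuous_interval[OF continuous_dens_ramp])
    show "(\<lambda>_. 2 * slope\<^sup>2 / \<beta>\<^sup>2) integrable_on {1-\<beta>..1}" by (rule integrable_const_ivl)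
    fix x assume x: "x \<in> {1-\<beta>..1}"
    define t where "t = slope * (x - (1 - \<beta>)) / \<beta>"
    have t: "0 \<le> t" "t \<le> slope" using x bpos unfolding t_def slope_def by (auto simp: field_simps)
    have "(sin (psi_ramp x))\<^sup>2 = (sin t)\<^sup>2" unfolding psi_ramp_def t_def by simp
    also have "\<dots> \<le> t\<^sup>2"
    proof -
      have "\<bar>sin t\<bar>\<^sup>2 \<le> \<bar>t\<bar>\<^sup>2" by (rule power_mono[OF abs_sin_x_le_abs_x]) simp
      then show ?thesis by simp
    qed
    also have "\<dots> \<le> slope\<^sup>2" using t by (intro power_mono) auto
    finally have "(sin (psi_ramp x))\<^sup>2 / \<beta>\<^sup>2 \<le> slope\<^sup>2 / \<beta>\<^sup>2" by (intro divide_right_mono) auto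
    then show "dens_ramp x \<le> 2 * slope\<^sup>2 / \<beta>\<^sup>2" unfolding dens_ramp_def by (simp add: power_divide)
  qed
  also have "\<dots> = \<beta> * (2 * slope\<^sup>2 / \<beta>\<^sup>2)" using bpos by simp
  also have "\<dots> = 2 * slope\<^sup>2 / \<beta>" using bpos by (simp add: power2_eq_square)
  finally show ?thesis .
qed

lemma abs_kink_defect_le:
  assumes x: "x \<in> {0..2*c}"
  shows "\<bar>dpsi_kink x - sin (psi_kink x) / \<beta>\<bar> \<le> eps / c + eps / \<beta>"
proof -
  have "\<bar>sin (kink x) - sin (psi_kink x)\<bar> \<le> \<bar>kink x - psi_kink x\<bar>" by (rule abs_sin_diff_le)
  also have "\<bar>kink x - psi_kink x\<bar> = eps * \<bar>x / c - 1\<bar>" unfolding psi_kink_def using eps_nonneg by (simp add: abs_mult)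
  also have "\<dots> \<le> eps * 1" using x c_pos eps_nonneg by (intro mult_left_mono) (auto simp: field_simps abs_le_iff)
  finally have sl: "\<bar>sin (kink x) - sin (psi_kink x)\<bar> \<le> eps" by simp
  have "dpsi_kink x - sin (psi_kink x) / \<beta> = eps / c + (sin (kink x) - sin (psi_kink x)) / \<beta>"
    unfolding dpsi_kink_def by (simp add: diff_divide_distrib)
  then have "\<bar>dpsi_kink x - sin (psi_kink x) / \<beta>\<bar> \<le> \<bar>eps / c\<bar> + \<bar>sin (kink x) - sin (psi_kink x)\<bar> / \<beta>"
    using abs_triangle_ineq[of "eps / c" "(sin (kink x) - sin (psi_kink x)) / \<beta>"] bpos by (simp add: abs_divide)
  also have "\<dots> \<le> eps / c + eps / \<beta>"
    using sl bpos c_pos eps_nonneg by (auto intro: divide_right_mono)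
  finally show ?thesis .
qed

text \<open>Bogomolnyi splitting \<open>\<phi>'\<^sup>2 + sin\<^sup>2\<phi>/\<beta>\<^sup>2 = 2\<phi>' sin \<phi>/\<beta> + (\<phi>' - sin \<phi>/\<beta>)\<^sup>2\<close>: the first term
  integrates to \<open>4/\<beta>\<close> since \<open>psi_kink\<close> runs from \<open>0\<close> to \<open>\<pi>\<close>.\<close>

lemma integral_dens_kink_le: "integral {0..2*c} dens_kink \<le> 4 / \<beta> + 2 * c * (eps / c + eps / \<beta>)\<^sup>2"
proof -
  define A where "A x = 2 * dpsi_kink x * sin (psi_kink x) / \<beta>" for x
  define R where "R x = (dpsi_kink x - sin (psi_kink x) / \<beta>)\<^sup>2" for x
  have GAR: "dens_kink x = A x + R x" for x
    unfolding dens_kink_def A_def R_def using bpos by (simp add: power2_eq_square field_simps)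
  have "(A has_integral ((- 2 * cos (psi_kink (2*c)) / \<beta>) - (- 2 * cos (psi_kink 0) / \<beta>))) {0..2*c}"
  proof (rule fundamental_theorem_of_calculus)
    show "0 \<le> 2 * c" using c_pos by simp
    fix x assume "x \<in> {0..2*c}"
    have "((\<lambda>x. - 2 * cos (psi_kink x) / \<beta>) has_real_derivative (- 2 * (- sin (psi_kink x) * dpsi_kink x) / \<beta>)) (at x)"
      using psi_kink_has_derivative bpos by (auto intro!: derivative_eq_intros)
    moreover have "- 2 * (- sin (psi_kink x) * dpsi_kink x) / \<beta> = A x" unfolding A_def by simp
    ultimately show "((\<lambda>x. - 2 * cos (psi_kink x) / \<beta>) has_vector_derivative A x) (at x within {0..2*c})"
      by (simp add: has_real_derivative_iff_has_vector_derivative has_vector_derivative_at_within)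
  qed
  then have intA: "(A has_integral (4 / \<beta>)) {0..2*c}" using psi_kink_0 psi_kink_2c by simp
  have Rb: "R x \<le> (eps / c + eps / \<beta>)\<^sup>2" if "x \<in> {0..2*c}" for x
    unfolding R_def using power_mono[OF abs_kink_defect_le[OF that] abs_ge_zero, of 2] by simp
  have intR: "R integrable_on {0..2*c}"
    unfolding R_def[abs_def] using bpos
    by (intro integrable_continuous_interval continuous_intros continuous_dpsi_kink continuous_psi_kink) auto
  have "integral {0..2*c} dens_kink = integral {0..2*c} A + integral {0..2*c} R"
    unfolding GAR using integral_add[OF has_integral_integrable[OF intA] intR] .
  also have "integral {0..2*c} A = 4 / \<beta>" using intA by (rule integral_unique)
  also have "integral {0..2*c} R \<le> integral {0..2*c} (\<lambda>_. (eps / c + eps / \<beta>)\<^sup>2)"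
    by (rule integral_le[OF intR]) (use Rb in auto)
  also have "\<dots> = 2 * c * (eps / c + eps / \<beta>)\<^sup>2" using c_pos by simp
  finally show ?thesis by simp
qed

lemma energy_psi_le:
  "\<beta> / 2 * (integral {0..1} (\<lambda>x. (dpsi x)\<^sup>2) + integral {0..1} (\<lambda>x. (sin (psi x))\<^sup>2) / \<beta>\<^sup>2) \<le> 2 + 1/162 + 1/16"
proof -
  have i23: "dens integrable_on {2*c..1}"
    by (rule Henstock_Kurzweil_Integration.integrable_combine[OF c_le _ integrable_dens_flat_part integrable_dens_ramp_part]) (use bpos in simp)
  have "integral {0..2*c} dens + integral {2*c..1} dens = integral {0..1} dens"
    using c_pos c_le bpos
    by (intro Henstock_Kurzweil_Integration.integral_combine
        Henstock_Kurzweil_Integration.integrable_combine[OF _ _ integrable_dens_kink_part i23]) auto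
  moreover have "integral {2*c..1-\<beta>} dens + integral {1-\<beta>..1} dens = integral {2*c..1} dens"
    by (rule Henstock_Kurzweil_Integration.integral_combine[OF c_le _ i23]) (use bpos in simp)
  ultimately have tot: "integral {0..1} dens = integral {0..2*c} dens_kink + integral {1-\<beta>..1} dens_ramp"
    using integral_dens_kink_part integral_dens_flat_part integral_dens_ramp_part by simp
  have split: "integral {0..1} dens = integral {0..1} (\<lambda>x. (dpsi x)\<^sup>2) + integral {0..1} (\<lambda>x. (sin (psi x))\<^sup>2) / \<beta>\<^sup>2"
  proof -
    have c: "(\<lambda>x. (sin (psi x))\<^sup>2 / \<beta>\<^sup>2) integrable_on {0..1}"
      using bpos by (intro integrable_continuous_interval continuous_intros continuous_on_subset[OF continuous_psi]) auto
    show ?thesis unfolding dens_def[abs_def] using integral_add[OF has_H1_derivD(2)[OF has_H1_deriv_psi] c] by simp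
  qed
  have epsq: "2 * c * (eps / c + eps / \<beta>)\<^sup>2 \<le> 1 / (81 * \<beta>)"
  proof -
    have "2 * c * (eps / c + eps / \<beta>)\<^sup>2 = (81/4) * eps\<^sup>2 / \<beta>"
      using bpos unfolding c_eq by (simp add: power2_eq_square field_simps)
    also have "\<dots> \<le> (81/4) * (2/81)\<^sup>2 / \<beta>"
      using eps_nonneg eps_le bpos by (intro divide_right_mono mult_left_mono power_mono) auto
    also have "\<dots> = 1 / (81 * \<beta>)" by (simp add: power2_eq_square field_simps)
    finally show ?thesis .
  qed
  have "integral {0..1} dens \<le> 4 / \<beta> + 1 / (81 * \<beta>) + 2 * slope\<^sup>2 / \<beta>"
    using tot integral_dens_kink_le integral_dens_ramp_le epsq by linarith
  then have "\<beta> / 2 * integral {0..1} dens \<le> \<beta> / 2 * (4 / \<beta> + 1 / (81 * \<beta>) + 2 * slope\<^sup>2 / \<beta>)"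
    using bpos by (intro mult_left_mono) auto
  also have "\<dots> = 2 + 1/162 + 1/16" using bpos by (simp add: slope_def field_simps)
  finally show ?thesis using split by simp
qed

lemma F_energy_psi_le:
  "F_energy \<beta> \<kappa> psi dpsi \<le> (2 + 1/162 + 1/16) / (4 * \<beta>) - \<kappa> / 2 * (pi + 1/4)"
proof -
  define X where "X = integral {0..1} (\<lambda>x. (dpsi x)\<^sup>2) + integral {0..1} (\<lambda>x. (sin (psi x))\<^sup>2) / \<beta>\<^sup>2"
  have "F_energy \<beta> \<kappa> psi dpsi = 1/8 * X - \<kappa> / 2 * (pi + 1/4)"
    using F_energy_eq[OF has_H1_deriv_psi, where \<beta>=\<beta> and \<kappa>=\<kappa>] psi_0 psi_1 unfolding X_def by simp
  also have "1/8 * X = (\<beta> / 2 * X) / (4 * \<beta>)"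
    using bpos by simp
  also have "\<dots> \<le> (2 + 1/162 + 1/16) / (4 * \<beta>)"
    using energy_psi_le bpos unfolding X_def by (intro divide_right_mono) auto
  finally show ?thesis by simp
qed

end

lemma Bogomolnyi_lower_bound:
  assumes bpos: "0 < \<beta>" and cP: "continuous_on {0..1} P" and cp: "continuous_on {0..1} phi"
    and d: "\<And>s. s \<in> {0..1} \<Longrightarrow> (phi has_real_derivative P s) (at s within {0..1})"
    and z: "phi 0 = 0"
  shows "integral {0..1} (\<lambda>x. (P x)\<^sup>2) + integral {0..1} (\<lambda>x. (sin (phi x))\<^sup>2) / \<beta>\<^sup>2 \<ge> 2 * (1 - cos (phi 1)) / \<beta>"
proof -
  have "integral {0..1} (\<lambda>x. (P x)\<^sup>2) + integral {0..1} (\<lambda>x. (sin (phi x))\<^sup>2) / \<beta>\<^sup>2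
      = integral {0..1} (\<lambda>x. (P x)\<^sup>2 + (sin (phi x))\<^sup>2 / \<beta>\<^sup>2)"
    using integral_add[of "\<lambda>x. (P x)\<^sup>2" "{0..1}" "\<lambda>x. (sin (phi x))\<^sup>2 / \<beta>\<^sup>2"] bpos
    by (simp add: integrable_continuous_interval continuous_intros cP cp)
  also have "\<dots> \<ge> integral {0..1} (\<lambda>x. 2 * (P x * sin (phi x)) / \<beta>)"
  proof (rule integral_le)
    show "(\<lambda>x. 2 * (P x * sin (phi x)) / \<beta>) integrable_on {0..1}"
      using bpos by (intro integrable_continuous_interval continuous_intros cP cp) auto
    show "(\<lambda>x. (P x)\<^sup>2 + (sin (phi x))\<^sup>2 / \<beta>\<^sup>2) integrable_on {0..1}"
      using bpos by (intro integrable_continuous_interval continuous_intros cP cp) auto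
    fix x
    have "0 \<le> (P x - sin (phi x) / \<beta>)\<^sup>2" by simp
    then show "2 * (P x * sin (phi x)) / \<beta> \<le> (P x)\<^sup>2 + (sin (phi x))\<^sup>2 / \<beta>\<^sup>2"
      using bpos by (simp add: power2_eq_square field_simps)
  qed
  also have "integral {0..1} (\<lambda>x. 2 * (P x * sin (phi x)) / \<beta>) = 2 * (1 - cos (phi 1)) / \<beta>"
  proof -
    have "((\<lambda>x. 2 * (P x * sin (phi x)) / \<beta>) has_integral ((- 2 * cos (phi 1) / \<beta>) - (- 2 * cos (phi 0) / \<beta>))) {0..1}"
    proof (rule fundamental_theorem_of_calculus)
      fix x :: real assume x: "x \<in> {0..1}"
      have "((\<lambda>x. - 2 * cos (phi x) / \<beta>) has_real_derivative (- 2 * (- sin (phi x) * P x) / \<beta>)) (at x within {0..1})"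
        using d[OF x] bpos by (auto intro!: derivative_eq_intros)
      then show "((\<lambda>x. - 2 * cos (phi x) / \<beta>) has_vector_derivative 2 * (P x * sin (phi x)) / \<beta>) (at x within {0..1})"
        by (simp add: has_real_derivative_iff_has_vector_derivative mult.commute)
    qed simp
    then have "integral {0..1} (\<lambda>x. 2 * (P x * sin (phi x)) / \<beta>) = (- 2 * cos (phi 1) / \<beta>) - (- 2 * cos (phi 0) / \<beta>)"
      by (rule integral_unique)
    then show ?thesis using z bpos by (simp add: field_simps)
  qed
  finally show ?thesis .
qed

lemma kink_energy_gap:
  assumes b: "0 < \<beta>" and K: "1 / pi < \<kappa> * \<beta>" and th: "pi/2 \<le> th" "th < pi"
  shows "(2 + 1/162 + 1/16) / (4 * \<beta>) - \<kappa> / 2 * (pi + 1/4) < (1 - cos th) / (4 * \<beta>) - \<kappa> / 2 * th"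
proof -
  define K where "K = \<kappa> * \<beta>"
  have "2 * (1/pi) * (pi + 1/4 - th) < 2 * K * (pi + 1/4 - th)"
    using K th unfolding K_def by (intro mult_strict_right_mono) auto
  moreover have "2 * (1/pi) * (pi + 1/4 - th) = 2 + 1/(2*pi) - 2 * th / pi" by (simp add: field_simps)
  moreover have "cos th \<le> 1 - 2 * th / pi" by (rule cos_le_chord) (use th in auto)
  moreover have "1/8 < 1/(2*pi)" using pi_less_4 by (simp add: field_simps)
  moreover have "2 * K * (pi + 1/4 - th) = 2 * K * (pi + 1/4) - 2 * K * th" by (simp add: algebra_simps)
  ultimately have "(2 + 1/162 + 1/16) - 2 * K * (pi + 1/4) < (1 - cos th) - 2 * K * th"
    by linarith
  then have "((2 + 1/162 + 1/16) - 2 * K * (pi + 1/4)) / (4 * \<beta>) < ((1 - cos th) - 2 * K * th) / (4 * \<beta>)"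
    using b by (intro divide_strict_right_mono) auto
  then show ?thesis using b unfolding K_def by (simp add: field_simps)
qed

lemma minimizer_reaches_pi:
  fixes phi :: "real \<Rightarrow> real"
  assumes b: "0 < \<beta>" "17 * \<beta> \<le> 1" and k: "0 < \<kappa>" "1 / pi < \<kappa> * \<beta>"
    and min: "is_minimizer \<beta> \<kappa> phi" and half: "pi / 2 \<le> phi 1"
  shows "pi \<le> phi 1"
proof (rule ccontr)
  assume "\<not> pi \<le> phi 1"
  then have th: "pi / 2 \<le> phi 1" "phi 1 < pi" using half by auto
  have "phi 1 \<noteq> 0" using half pi_gt_zero by linarith
  then obtain C where C: "0 < C"
    and d: "\<And>x. x \<in> {0..1} \<Longrightarrow> (phi has_real_derivative kink_speed \<beta> C (phi x)) (at x within {0..1})"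
    using minimizer_kink_ode[OF b(1) k(1) min, of 1] by auto
  define P where "P x = kink_speed \<beta> C (phi x)" for x
  have z: "phi 0 = 0" using min by (simp add: is_minimizer_def J_class_def)
  have dP: "\<And>x. x \<in> {0..1} \<Longrightarrow> (phi has_real_derivative P x) (at x within {0..1})"
    unfolding P_def by (rule d)
  have cp: "continuous_on {0..1} phi" by (rule DERIV_continuous_on[OF dP])
  have cP: "continuous_on {0..1} P"
    unfolding P_def kink_speed_def by (intro continuous_intros cp) (use b(1) in auto)
  have hP: "has_H1_deriv phi P" by (rule has_H1_deriv_of_C1[OF cP dP])
  interpret kink_competitor \<beta> using b by unfold_locales
  have "(2 + 1/162 + 1/16) / (4 * \<beta>) - \<kappa> / 2 * (pi + 1/4) < (1 - cos (phi 1)) / (4 * \<beta>) - \<kappa> / 2 * phi 1"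
    by (rule kink_energy_gap[OF b(1) k(2) th])
  also have "(1 - cos (phi 1)) / (4 * \<beta>) = 1/8 * (2 * (1 - cos (phi 1)) / \<beta>)"
    using b(1) by (simp add: field_simps)
  also have "1/8 * (2 * (1 - cos (phi 1)) / \<beta>) - \<kappa> / 2 * phi 1 \<le> F_energy \<beta> \<kappa> phi P"
    unfolding F_energy_eq[OF hP, where \<beta>=\<beta> and \<kappa>=\<kappa>] z diff_zero
    using Bogomolnyi_lower_bound[OF b(1) cP cp dP z] by (intro diff_right_mono mult_left_mono) auto
  also have "\<dots> \<le> F_energy \<beta> \<kappa> psi dpsi"
    using min hP J_classI[OF has_H1_deriv_psi psi_0] has_H1_deriv_psi unfolding is_minimizer_def by blast
  finally show False using F_energy_psi_le[of \<kappa>] by simp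
qed

section \<open>Symmetry of minimizers\<close>

lemma minimizer_symmetric_periodic:
  fixes phi :: "real \<Rightarrow> real"
  assumes b: "0 < \<beta>" "17 * \<beta> \<le> 1" and k: "0 < \<kappa>" "1 / pi < \<kappa> * \<beta>"
    and min: "is_minimizer \<beta> \<kappa> phi" and T: "0 < T / 2" "T / 2 < 1" and half: "phi (T / 2) = pi / 2"
  shows "T \<le> 1 \<and> (\<forall>x\<in>{0..T}. phi x = pi - phi (T - x)) \<and> phi T = pi \<and>
    (\<forall>x\<in>{0..1 - T}. phi (x + T) = pi + phi x)"
proof -
  have "phi (T / 2) \<noteq> 0" using half pi_gt_zero by linarith
  then obtain C where C: "0 < C"
    and d: "\<And>x. x \<in> {0..1} \<Longrightarrow> (phi has_real_derivative kink_speed \<beta> C (phi x)) (at x within {0..1})"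
    using minimizer_kink_ode[OF b(1) k(1) min, of "T / 2"] T by auto
  note lip = kink_speed_Lipschitz[OF C b(1)]
  have z: "phi 0 = 0" using min by (simp add: is_minimizer_def J_class_def)
  define P where "P x = kink_speed \<beta> C (phi x)" for x
  have mono: "phi x < phi y" if "0 \<le> x" "x < y" "y \<le> 1" for x y
    by (rule DERIV_pos_within_imp_less[where f=phi and f'=P, OF that(2,1,3)])
      (auto simp: P_def d kink_speed_pos[OF C])
  have sym: "\<forall>x\<in>{max 0 (T - 1)..min 1 T}. phi x = pi - phi (T - x)"
    by (rule autonomous_ode_reflection_symmetric[where f="kink_speed \<beta> C"],
        rule d, assumption, rule lip, rule kink_speed_pi_minus, (rule T)+, rule half)
  have T_le: "T \<le> 1"
  proof (rule ccontr)
    assume T1: "\<not> T \<le> 1"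
    then have "1 \<in> {max 0 (T - 1)..min 1 T}" using T by auto
    then have "phi 1 = pi - phi (T - 1)" using sym by blast
    moreover have "phi 0 < phi (T - 1)" using mono T T1 by auto
    moreover have "pi / 2 \<le> phi 1" using mono[of "T / 2" 1] T half by auto
    ultimately show False using minimizer_reaches_pi[OF b k min] z by linarith
  qed
  then have "max 0 (T - 1) = 0" "min 1 T = T" using T by auto
  with sym have sym': "\<forall>x\<in>{0..T}. phi x = pi - phi (T - x)" by metis
  have "phi T = pi" using bspec[OF sym', of 0] z T by simp
  moreover have "\<forall>x\<in>{0..1 - T}. phi (x + T) = pi + phi x"
    by (rule autonomous_ode_shift_periodic[where f="kink_speed \<beta> C"],
        rule d, assumption, rule lip, rule kink_speed_add_pi) (use T T_le \<open>phi T = pi\<close> z in auto)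
  ultimately show ?thesis using T_le sym' by blast
qed

theorem proposition9:
  fixes \<kappa> :: "real \<Rightarrow> real"
  assumes "\<forall>\<beta>>0. \<kappa> \<beta> > 0 \<and> \<kappa> \<beta> * \<beta> > 1 / pi"
  shows "\<exists>\<beta>0>0. \<forall>\<beta>. 0 < \<beta> \<and> \<beta> < \<beta>0 \<longrightarrow>
           (\<forall>phi T. is_minimizer \<beta> (\<kappa> \<beta>) phi \<longrightarrow> 0 < T / 2 \<longrightarrow> T / 2 < 1 \<longrightarrow>
              phi (T / 2) = pi / 2 \<longrightarrow>
              T \<le> 1 \<and>
              (\<forall>x\<in>{0..T}. phi x = pi - phi (T - x)) \<and>
              phi T = pi \<and>
              (\<forall>x\<in>{0..1 - T}. phi (x + T) = pi + phi x))"
proof -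
  have "T \<le> 1 \<and> (\<forall>x\<in>{0..T}. phi x = pi - phi (T - x)) \<and> phi T = pi \<and>
      (\<forall>x\<in>{0..1 - T}. phi (x + T) = pi + phi x)"
    if "0 < \<beta> \<and> \<beta> < 1/17" "is_minimizer \<beta> (\<kappa> \<beta>) phi" "0 < T / 2" "T / 2 < 1" "phi (T / 2) = pi / 2"
    for \<beta> phi T
    using that assms by (intro minimizer_symmetric_periodic) auto
  then show ?thesis by (intro exI[of _ "1/17"]) auto
qed

end
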